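(* For any permutations $\pi,\rho\in S_k$, $$\kappa^\rho_\pi(\mathbf w)=(-1)^{l(\pi)-l(\rho)}\prod_{a<b}\frac{w_b-qw_a}{w_b-w_a}\cdot Z^\rho_\pi(\mathbf w).$$
   Context: $q$ is a fixed parameter. $\kappa^\rho_\pi(\mathbf w)$ are the rational functions with $T_\pi=\sum_\rho\kappa^\rho_\pi(\mathbf w)t_\rho$, where $t_\rho f(w_1,\dots,w_k)=f(w_{\rho(1)},\dots,w_{\rho(k)})$, $T_i=q+\frac{w_{i+1}-qw_i}{w_{i+1}-w_i}(t_{\sigma_i}-1)$ and $T_\pi=T_{i_1}\cdots T_{i_l}$ for a reduced word $\pi=\sigma_{i_1}\cdots\sigma_{i_l}$; $l(\cdot)$ is the length. Weights: for colors $0\le i<j$ (color $0$ = no path), a vertex with incoming bottom $i'$, left $j'$, outgoing top $k'$, right $l'$ has weight $R_z(i',j';k',l')$ with $R_z(i,i;i,i)=1$, $R_z(j,i;j,i)=\frac{q(z-1)}{z-q}$, $R_z(j,i;i,j)=\frac{z(1-q)}{z-q}$, $R_z(i,j;i,j)=\frac{z-1}{z-q}$, $R_z(i,j;j,i)=\frac{1-q}{z-q}$, all others $0$. Partition function $Z^\rho_\pi(\mathbf w)$: on a $k\times k$ grid of vertices with columns $1,\dots,k$ (left to right) of rapidity $w_1,\dots,w_k$ and rows $1,\dots,k$ (bottom to top) of rapidity $w_{\rho(1)},\dots,w_{\rho(k)}$, impose boundary colors: bottom incoming edges all $0$, the left incoming edge of row $i$ has color $\pi(i)$, right outgoing edges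 all $0$, the top outgoing edge of column $j$ has color $j$. $Z^\rho_\pi(\mathbf w)$ is the sum over all colorings of the internal edges by $\{0,1,\dots,k\}$ of the product over vertices of $R_{x/y}$, where $x$ is the row rapidity and $y$ the column rapidity of the vertex. *)

theory Defs
  imports "HOL-Combinatorics.Permutations" "HOL-Combinatorics.Transposition"
begin

(* Permutations of {1..k} are functions nat => nat with  p permutes {1..k}.
   Points w = (w_1,...,w_k) are functions  w :: nat => 'a  (only w 1 .. w k matter). *)

definition perms :: "nat \<Rightarrow> (nat \<Rightarrow> nat) set" where
  "perms k = {p. p permutes {1..k}}"

definition perm_length :: "nat \<Rightarrow> (nat \<Rightarrow> nat) \<Rightarrow> nat" where
  "perm_length k p = card {(i, j). i \<in> {1..k} \<and> j \<in> {1..k} \<and> i < j \<and> p j < p i}"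

definition sigma :: "nat \<Rightarrow> nat \<Rightarrow> nat" where
  "sigma i = transpose i (Suc i)"

definition reduced_word :: "nat \<Rightarrow> (nat \<Rightarrow> nat) \<Rightarrow> nat list \<Rightarrow> bool" where
  "reduced_word k p is \<longleftrightarrow> (\<forall>i\<in>set is. 1 \<le> i \<and> i < k)
      \<and> foldr (\<lambda>i f. sigma i \<circ> f) is id = p
      \<and> length is = perm_length k p"

(* Elements  sum_rho c_rho(w) t_rho  of the algebra generated by multiplication operators
   (functions of w) and the permutation operators t_rho, with
   (t_rho f)(w_1,...,w_k) = f(w_{rho 1},...,w_{rho k}).  Such an element is represented by
   its coefficient map  rho |-> c_rho.  Since t_s t_r = t_(s o r) and t_s c = c(w o s) t_s,
   the product is as follows. *)
type_synonym 'a op = "(nat \<Rightarrow> nat) \<Rightarrow> (nat \<Rightarrow> 'a) \<Rightarrow> 'a"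

definition op_mult :: "nat \<Rightarrow> 'a::field op \<Rightarrow> 'a op \<Rightarrow> 'a op" where
  "op_mult k A B = (\<lambda>tau w. \<Sum>s\<in>perms k. A s w * B (inv s \<circ> tau) (w \<circ> s))"

definition op_one :: "'a::field op" where
  "op_one = (\<lambda>tau w. if tau = id then 1 else 0)"

(* T_i = q + (w_{i+1} - q w_i)/(w_{i+1} - w_i) (t_{sigma_i} - 1) *)
definition T_gen :: "'a::field \<Rightarrow> nat \<Rightarrow> 'a op" where
  "T_gen q i = (\<lambda>tau w. let c = (w (Suc i) - q * w i) / (w (Suc i) - w i) in
      (if tau = id then q - c else 0) + (if tau = sigma i then c else 0))"

definition T_word :: "'a::field \<Rightarrow> nat \<Rightarrow> nat list \<Rightarrow> 'a op" where
  "T_word q k is = foldr (\<lambda>i A. op_mult k (T_gen q i) A) is op_one"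

(* T_pi via (a chosen) reduced word; kappa^rho_pi(w) its coefficient at t_rho *)
definition T_perm :: "'a::field \<Rightarrow> nat \<Rightarrow> (nat \<Rightarrow> nat) \<Rightarrow> 'a op" where
  "T_perm q k p = T_word q k (SOME is. reduced_word k p is)"

definition kappa :: "'a::field \<Rightarrow> nat \<Rightarrow> (nat \<Rightarrow> nat) \<Rightarrow> (nat \<Rightarrow> nat) \<Rightarrow> (nat \<Rightarrow> 'a) \<Rightarrow> 'a" where
  "kappa q k p rho w = T_perm q k p rho w"

(* vertex weight R_z(bottom, left; top, right) *)
definition Rw :: "'a::field \<Rightarrow> 'a \<Rightarrow> nat \<Rightarrow> nat \<Rightarrow> nat \<Rightarrow> nat \<Rightarrow> 'a" where
  "Rw q z a b c d =
     (if a = b \<and> c = a \<and> d = a then 1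
      else if b < a \<and> c = a \<and> d = b then q * (z - 1) / (z - q)
      else if b < a \<and> c = b \<and> d = a then z * (1 - q) / (z - q)
      else if a < b \<and> c = a \<and> d = b then (z - 1) / (z - q)
      else if a < b \<and> c = b \<and> d = a then (1 - q) / (z - q)
      else 0)"

(* colour of horizontal edge to the right of vertex (r,c) (c = 0: left boundary of row r),
   given internal horizontal colouring h on {1..k} x {1..k-1} *)
definition hcol :: "nat \<Rightarrow> (nat \<Rightarrow> nat) \<Rightarrow> (nat \<times> nat \<Rightarrow> nat) \<Rightarrow> nat \<Rightarrow> nat \<Rightarrow> nat" where
  "hcol k p h r c = (if c = 0 then p r else if c = k then 0 else h (r, c))"

(* colour of vertical edge above vertex (r,c) (r = 0: bottom boundary of column c),
   given internal vertical colouring v on {1..k-1} x {1..k} *)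
definition vcol :: "nat \<Rightarrow> (nat \<times> nat \<Rightarrow> nat) \<Rightarrow> nat \<Rightarrow> nat \<Rightarrow> nat" where
  "vcol k v r c = (if r = 0 then 0 else if r = k then c else v (r, c))"

definition Zpf :: "'a::field \<Rightarrow> nat \<Rightarrow> (nat \<Rightarrow> nat) \<Rightarrow> (nat \<Rightarrow> nat) \<Rightarrow> (nat \<Rightarrow> 'a) \<Rightarrow> 'a" where
  "Zpf q k p rho w =
    (\<Sum>h\<in>({1..k} \<times> {1..<k}) \<rightarrow>\<^sub>E {0..k}. \<Sum>v\<in>({1..<k} \<times> {1..k}) \<rightarrow>\<^sub>E {0..k}.
      \<Prod>r\<in>{1..k}. \<Prod>c\<in>{1..k}.
        Rw q (w (rho r) / w c) (vcol k v (r - 1) c) (hcol k p h r (c - 1))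
             (vcol k v r c) (hcol k p h r c))"

end

theory Submission
  imports Defs
begin

text \<open>Both sides obey the same recursion along a reduced word of \<open>\<pi>\<close>.  Appending a letter \<open>j\<close>
  multiplies by \<open>T_j\<close>, which mixes the coefficients of \<open>t_\<tau>\<close> and \<open>t_(\<tau> \<circ> \<sigma>_j)\<close>.  On the lattice side,
  the rapidities of rows \<open>j\<close> and \<open>j + 1\<close> are exchanged by attaching a cross on the left and pushing
  it through the lattice with the Yang--Baxter equation (the train argument); for an ascent
  \<open>a = \<pi> j < b = \<pi> (j + 1)\<close> this gives
  \<open>Z^(\<tau>\<sigma>_j)_\<pi> = R(a,b;a,b) Z^\<tau>_(\<pi>\<sigma>_j) + R(a,b;b,a) Z^\<tau>_\<pi>\<close>, and the two recursions agree up to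
  the sign \<open>(-1)^(l(\<pi>) - l(\<rho>))\<close>.  For \<open>\<pi> = id\<close> the lattice is frozen: \<open>Z^\<tau>_id\<close> vanishes unless
  \<open>\<tau> = id\<close>, and \<open>Z^id_id\<close> is the inverse of the prefactor.\<close>

section \<open>Adjacent transpositions and reduced words\<close>

lemma sigma_apply:
  "sigma j j = Suc j" "sigma j (Suc j) = j" "i \<noteq> j \<Longrightarrow> i \<noteq> Suc j \<Longrightarrow> sigma j i = i"
  by (auto simp: sigma_def transpose_def)

lemma sigma_sigma [simp]: "sigma j (sigma j i) = i"
  by (auto simp: sigma_def transpose_def)

lemma sigma_comp_sigma [simp]: "sigma j \<circ> sigma j = id"
  by (auto simp: fun_eq_iff)

lemma sigma_permutes: "1 \<le> j \<Longrightarrow> j < k \<Longrightarrow> sigma j permutes {1..k}"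
  unfolding sigma_def by (rule permutes_swap_id) auto

lemma sigma_less_sigma: "i < i' \<Longrightarrow> (i, i') \<noteq> (j, Suc j) \<Longrightarrow> sigma j i < sigma j i'"
  by (auto simp: sigma_def transpose_def)

lemma permutes_apply_Suc_neq:
  "g permutes {1..k} \<Longrightarrow> g j \<noteq> g (Suc j)"
  by (metis permutes_inj injD n_not_Suc_n)

definition inversions :: "nat \<Rightarrow> (nat \<Rightarrow> nat) \<Rightarrow> (nat \<times> nat) set" where
  "inversions k g = {(i, j). i \<in> {1..k} \<and> j \<in> {1..k} \<and> i < j \<and> g j < g i}"

lemma perm_length_eq_card_inversions: "perm_length k g = card (inversions k g)"
  unfolding perm_length_def inversions_def ..

lemma finite_inversions: "finite (inversions k g)"
  by (rule finite_subset[of _ "{1..k} \<times> {1..k}"]) (auto simp: inversions_def)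

lemma perm_length_id [simp]: "perm_length k id = 0"
proof -
  have "inversions k id = {}"
    by (auto simp: inversions_def)
  then show ?thesis
    by (simp add: perm_length_eq_card_inversions)
qed

lemma inversions_comp_sigma_ascent:
  assumes "1 \<le> j" "j < k" "g j < g (Suc j)"
  shows "inversions k (g \<circ> sigma j) = insert (j, Suc j) (map_prod (sigma j) (sigma j) ` inversions k g)"
proof -
  have sigma_in: "i \<in> {1..k} \<longleftrightarrow> sigma j i \<in> {1..k}" for i
    using permutes_in_image[OF sigma_permutes[OF assms(1,2)]] by blast
  have less_iff: "i < i' \<longleftrightarrow> sigma j i < sigma j i'"
    if "(i, i') \<noteq> (j, Suc j)" "(i, i') \<noteq> (Suc j, j)" for i i'
    using that sigma_less_sigma[of i i' j] sigma_less_sigma[of i' i j]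
    by (cases i i' rule: linorder_cases) auto
  have mem_iff: "x \<in> inversions k (g \<circ> sigma j) \<longleftrightarrow>
      x = (j, Suc j) \<or> map_prod (sigma j) (sigma j) x \<in> inversions k g" for x
  proof (cases x)
    case (Pair i i')
    consider "(i, i') = (j, Suc j)" | "(i, i') = (Suc j, j)"
      | "(i, i') \<noteq> (j, Suc j)" "(i, i') \<noteq> (Suc j, j)" by blast
    then show ?thesis
    proof cases
      case 3
      then show ?thesis
        using Pair less_iff[OF 3] sigma_in[of i] sigma_in[of i'] by (auto simp: inversions_def)
    qed (use Pair assms in \<open>auto simp: inversions_def sigma_apply\<close>)
  qed
  have "y \<in> map_prod (sigma j) (sigma j) ` A \<longleftrightarrow> map_prod (sigma j) (sigma j) y \<in> A" for y A
    by (cases y) (auto simp: image_iff intro: bexI[where x = "map_prod (sigma j) (sigma j) y"])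
  then show ?thesis
    using mem_iff by blast
qed

lemma perm_length_comp_sigma_ascent:
  assumes "1 \<le> j" "j < k" "g j < g (Suc j)"
  shows "perm_length k (g \<circ> sigma j) = Suc (perm_length k g)"
proof -
  have "inj (map_prod (sigma j) (sigma j))"
    by (simp add: sigma_def inj_transpose prod.inj_map)
  moreover have "(j, Suc j) \<notin> map_prod (sigma j) (sigma j) ` inversions k g"
  proof
    assume "(j, Suc j) \<in> map_prod (sigma j) (sigma j) ` inversions k g"
    then obtain i i' where inv: "(i, i') \<in> inversions k g" and "sigma j i = j" "sigma j i' = Suc j"
      by auto
    then have "i = Suc j" "i' = j"
      by (metis sigma_apply(1) sigma_sigma, metis sigma_apply(2) sigma_sigma)
    with inv have "(Suc j, j) \<in> inversions k g"
      by simp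
    then show False
      by (simp add: inversions_def)
  qed
  ultimately show ?thesis
    unfolding perm_length_eq_card_inversions inversions_comp_sigma_ascent[OF assms]
    using finite_inversions by (simp add: card_image inj_on_subset)
qed

lemma perm_length_comp_sigma_descent:
  assumes "1 \<le> j" "j < k" "g (Suc j) < g j"
  shows "Suc (perm_length k (g \<circ> sigma j)) = perm_length k g"
  using perm_length_comp_sigma_ascent[of j k "g \<circ> sigma j"] assms
  by (simp add: sigma_apply comp_assoc)

lemma perm_length_comp_sigma_cases:
  assumes "g permutes {1..k}" "1 \<le> j" "j < k"
  obtains "g j < g (Suc j)" "perm_length k (g \<circ> sigma j) = Suc (perm_length k g)"
    | "g (Suc j) < g j" "Suc (perm_length k (g \<circ> sigma j)) = perm_length k g"
proof (cases "g j < g (Suc j)")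
  case True
  then show ?thesis
    using that(1) perm_length_comp_sigma_ascent[OF assms(2,3)] by blast
next
  case False
  then have "g (Suc j) < g j"
    using permutes_apply_Suc_neq[OF assms(1), of j] by linarith
  then show ?thesis
    using that(2) perm_length_comp_sigma_descent[OF assms(2,3)] by blast
qed

lemma permutes_exists_apply_less:
  fixes g :: "nat \<Rightarrow> nat"
  assumes "g permutes {1..k}" "g \<noteq> id"
  shows "\<exists>i\<in>{1..k}. g i < i"
proof (rule ccontr)
  assume "\<not> ?thesis"
  then have ge: "i \<le> g i" if "i \<in> {1..k}" for i
    using that not_less by blast
  obtain i0 where "g i0 \<noteq> i0"
    using assms(2) by (metis eq_id_iff)
  moreover have i0: "i0 \<in> {1..k}"
    using \<open>g i0 \<noteq> i0\<close> permutes_not_in[OF assms(1)] by blast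
  ultimately have "i0 < g i0"
    using ge[OF i0] by (metis order_le_neq_trans)
  then have "(\<Sum>i\<in>{1..k}. i) < (\<Sum>i\<in>{1..k}. g i)"
    using ge i0 by (intro sum_strict_mono_ex1) auto
  moreover have "(\<Sum>i\<in>{1..k}. g i) = (\<Sum>i\<in>{1..k}. i)"
    using sum.permute[OF assms(1), of "\<lambda>i. i"] by (simp add: comp_def)
  ultimately show False
    by simp
qed

lemma permutes_ascending_eq_id:
  assumes "g permutes {1..k}" "\<And>j. 1 \<le> j \<Longrightarrow> j < k \<Longrightarrow> g j < g (Suc j)"
  shows "g = id"
proof (rule ccontr)
  have ge: "i \<le> g i" if "i \<in> {1..k}" for i
    using that
  proof (induction i)
    case (Suc i)
    show ?case
    proof (cases "i = 0")
      case True
      then show ?thesis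
        using permutes_in_image[OF assms(1)] Suc.prems by fastforce
    next
      case False
      then have "i \<le> g i" "g i < g (Suc i)"
        using Suc assms(2)[of i] by auto
      then show ?thesis
        by linarith
    qed
  qed simp
  assume "g \<noteq> id"
  then obtain i where "i \<in> {1..k}" "g i < i"
    using permutes_exists_apply_less[OF assms(1)] by blast
  then show False
    using ge by (meson not_le)
qed

definition word_perm :: "nat list \<Rightarrow> nat \<Rightarrow> nat" where
  "word_perm ws = foldr (\<lambda>i f. sigma i \<circ> f) ws id"

lemma word_perm_Nil [simp]: "word_perm [] = id"
  unfolding word_perm_def by (simp add: id_def)

lemma word_perm_snoc: "word_perm (ws @ [j]) = word_perm ws \<circ> sigma j"
proof -
  have "foldr (\<lambda>i f. sigma i \<circ> f) ws g = word_perm ws \<circ> g" for g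
    unfolding word_perm_def by (induction ws) (simp_all add: comp_assoc)
  then show ?thesis
    by (simp add: word_perm_def)
qed

lemma word_perm_permutes: "\<forall>i\<in>set ws. 1 \<le> i \<and> i < k \<Longrightarrow> word_perm ws permutes {1..k}"
proof (induction ws rule: rev_induct)
  case Nil
  show ?case
    by (simp only: word_perm_Nil permutes_id)
next
  case (snoc j ws)
  then show ?case
    unfolding word_perm_snoc by (intro permutes_compose sigma_permutes) auto
qed

lemma perm_length_word_perm_le:
  "\<forall>i\<in>set ws. 1 \<le> i \<and> i < k \<Longrightarrow> perm_length k (word_perm ws) \<le> length ws"
proof (induction ws rule: rev_induct)
  case Nil
  show ?case
    by (simp only: word_perm_Nil perm_length_id list.size(3) order_refl)
next
  case (snoc j ws)
  then have ws: "\<forall>i\<in>set ws. 1 \<le> i \<and> i < k" and j: "1 \<le> j" "j < k"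
    by auto
  have "perm_length k (word_perm ws \<circ> sigma j) \<le> Suc (perm_length k (word_perm ws))"
    using word_perm_permutes[OF ws] j by (cases rule: perm_length_comp_sigma_cases) linarith+
  then show ?case
    using snoc.IH[OF ws] unfolding word_perm_snoc length_append_singleton by linarith
qed

lemma reduced_word_iff:
  "reduced_word k p ws \<longleftrightarrow>
     (\<forall>i\<in>set ws. 1 \<le> i \<and> i < k) \<and> word_perm ws = p \<and> length ws = perm_length k p"
  unfolding reduced_word_def word_perm_def ..

lemma reduced_word_snocD:
  assumes "reduced_word k p (ws @ [j])"
  shows "reduced_word k (p \<circ> sigma j) ws" "1 \<le> j" "j < k"
    "(p \<circ> sigma j) j < (p \<circ> sigma j) (Suc j)"
    "perm_length k p = Suc (perm_length k (p \<circ> sigma j))"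
proof -
  have ws: "\<forall>i\<in>set ws. 1 \<le> i \<and> i < k" and j: "1 \<le> j" "j < k"
    and p: "word_perm ws \<circ> sigma j = p" and len: "Suc (length ws) = perm_length k p"
    using assms by (auto simp: reduced_word_iff word_perm_snoc)
  have p': "p \<circ> sigma j = word_perm ws"
    using p by (auto simp: comp_assoc[symmetric])
  have "perm_length k (word_perm ws) \<le> length ws"
    using perm_length_word_perm_le[OF ws] .
  with word_perm_permutes[OF ws] j p len
  have "perm_length k (word_perm ws) = length ws \<and> word_perm ws j < word_perm ws (Suc j)"
    by (cases rule: perm_length_comp_sigma_cases) auto
  then show "reduced_word k (p \<circ> sigma j) ws" "(p \<circ> sigma j) j < (p \<circ> sigma j) (Suc j)"
    "perm_length k p = Suc (perm_length k (p \<circ> sigma j))"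
    using ws p' len by (auto simp: reduced_word_iff)
  show "1 \<le> j" "j < k"
    by (fact j)+
qed

lemma reduced_word_exists:
  "g permutes {1..k} \<Longrightarrow> \<exists>ws. reduced_word k g ws"
proof (induction "perm_length k g" arbitrary: g rule: less_induct)
  case less
  show ?case
  proof (cases "\<exists>j. 1 \<le> j \<and> j < k \<and> g (Suc j) < g j")
    case True
    then obtain j where j: "1 \<le> j" "j < k" "g (Suc j) < g j"
      by auto
    have len: "Suc (perm_length k (g \<circ> sigma j)) = perm_length k g"
      using perm_length_comp_sigma_descent[OF j] .
    have "g \<circ> sigma j permutes {1..k}"
      using less.prems sigma_permutes[OF j(1,2)] by (simp add: permutes_compose)
    with less.hyps[of "g \<circ> sigma j"] len obtain ws where "reduced_word k (g \<circ> sigma j) ws"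
      by auto
    then have "reduced_word k g (ws @ [j])"
      using j len by (auto simp: reduced_word_iff word_perm_snoc comp_assoc[symmetric])
    then show ?thesis ..
  next
    case False
    then have "g = id"
      using permutes_apply_Suc_neq[OF less.prems]
      by (intro permutes_ascending_eq_id[OF less.prems]) (meson linorder_neqE_nat)
    then have "reduced_word k g []"
      by (simp add: reduced_word_iff)
    then show ?thesis ..
  qed
qed

section \<open>The operators \<open>T_w\<close>\<close>

lemma mem_perms_iff: "s \<in> perms k \<longleftrightarrow> s permutes {1..k}"
  by (simp add: perms_def)

lemma finite_perms: "finite (perms k)"
  unfolding perms_def by (rule finite_permutations) simp

lemma inv_comp_eq_iff:
  assumes "bij s"
  shows "inv s \<circ> t = r \<longleftrightarrow> t = s \<circ> r"
proof
  assume "inv s \<circ> t = r"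
  then have "s \<circ> (inv s \<circ> t) = s \<circ> r"
    by simp
  then show "t = s \<circ> r"
    using bij_is_surj[OF assms, unfolded surj_iff] by (simp add: comp_assoc[symmetric])
next
  assume "t = s \<circ> r"
  then show "inv s \<circ> t = r"
    using bij_is_inj[OF assms, unfolded inj_iff] by (simp add: comp_assoc[symmetric])
qed

lemma op_mult_assoc: "op_mult k (op_mult k A B) C = op_mult k A (op_mult k B C)"
proof (intro ext)
  fix t :: "nat \<Rightarrow> nat" and w :: "nat \<Rightarrow> 'a"
  have "op_mult k (op_mult k A B) C t w =
      (\<Sum>u\<in>perms k. \<Sum>s\<in>perms k. A u w * B (inv u \<circ> s) (w \<circ> u) * C (inv s \<circ> t) (w \<circ> s))"
    unfolding op_mult_def by (simp add: sum_distrib_right) (rule sum.swap)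
  also have "\<dots> = (\<Sum>u\<in>perms k. \<Sum>v\<in>perms k.
      A u w * (B v (w \<circ> u) * C (inv v \<circ> (inv u \<circ> t)) ((w \<circ> u) \<circ> v)))"
  proof (rule sum.cong[OF refl])
    fix u assume "u \<in> perms k"
    then have u: "u permutes {1..k}"
      by (simp add: mem_perms_iff)
    have cancel: "u \<circ> (inv u \<circ> f) = f" "inv u \<circ> (u \<circ> f) = f" for f :: "'c \<Rightarrow> nat"
      using permutes_inv_o[OF u] by (simp_all add: comp_assoc[symmetric])
    show "(\<Sum>s\<in>perms k. A u w * B (inv u \<circ> s) (w \<circ> u) * C (inv s \<circ> t) (w \<circ> s)) =
        (\<Sum>v\<in>perms k. A u w * (B v (w \<circ> u) * C (inv v \<circ> (inv u \<circ> t)) ((w \<circ> u) \<circ> v)))"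
    proof (rule sum.reindex_bij_witness[where i = "\<lambda>v. u \<circ> v" and j = "\<lambda>s. inv u \<circ> s"])
      fix s assume "s \<in> perms k"
      then have s: "s permutes {1..k}"
        by (simp add: mem_perms_iff)
      show "u \<circ> (inv u \<circ> s) = s" "inv u \<circ> s \<in> perms k"
        using u s by (simp_all add: mem_perms_iff permutes_compose permutes_inv cancel)
      have "bij u" "bij s"
        using u s by (simp_all add: permutes_bij)
      then have "inv (inv u \<circ> s) = inv s \<circ> u"
        by (simp add: o_inv_distrib bij_imp_bij_inv inv_inv_eq)
      then show "A u w * (B (inv u \<circ> s) (w \<circ> u) * C (inv (inv u \<circ> s) \<circ> (inv u \<circ> t)) ((w \<circ> u) \<circ> (inv u \<circ> s))) =
          A u w * B (inv u \<circ> s) (w \<circ> u) * C (inv s \<circ> t) (w \<circ> s)"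
        by (simp add: comp_assoc cancel mult.assoc)
    next
      fix v assume "v \<in> perms k"
      then show "inv u \<circ> (u \<circ> v) = v" "u \<circ> v \<in> perms k"
        using u by (simp_all add: mem_perms_iff permutes_compose cancel)
    qed
  qed
  also have "\<dots> = op_mult k A (op_mult k B C) t w"
    unfolding op_mult_def by (simp add: sum_distrib_left)
  finally show "op_mult k (op_mult k A B) C t w = op_mult k A (op_mult k B C) t w" .
qed

lemma op_mult_one_left: "op_mult k op_one B = B"
proof (intro ext)
  fix t :: "nat \<Rightarrow> nat" and w :: "nat \<Rightarrow> 'a"
  have "id \<in> perms k"
    by (simp add: mem_perms_iff permutes_id)
  then show "op_mult k op_one B t w = B t w"
    unfolding op_mult_def op_one_def using finite_perms
    by (simp add: if_distrib[of "\<lambda>x. x * _"] cong: if_cong)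
qed

lemma op_mult_one_right:
  assumes "t \<in> perms k"
  shows "op_mult k A op_one t w = A t w"
proof -
  have "op_mult k A op_one t w = (\<Sum>s\<in>perms k. if s = t then A s w else 0)"
    unfolding op_mult_def op_one_def
    by (intro sum.cong refl) (simp add: inv_comp_eq_iff mem_perms_iff permutes_bij)
  also have "\<dots> = A t w"
    using assms finite_perms by simp
  finally show ?thesis .
qed

lemma T_word_Nil: "T_word q k [] = op_one"
  by (simp add: T_word_def)

lemma T_word_Cons: "T_word q k (i # ws) = op_mult k (T_gen q i) (T_word q k ws)"
  by (simp add: T_word_def)

lemma T_word_snoc: "T_word q k (ws @ [j]) = op_mult k (T_word q k ws) (op_mult k (T_gen q j) op_one)"
proof -
  let ?F = "\<lambda>i A. op_mult k (T_gen q i) A"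
  have foldr_eq: "foldr ?F ws B = op_mult k (T_word q k ws) B" for B
    by (induction ws) (simp_all add: T_word_Nil T_word_Cons op_mult_one_left op_mult_assoc)
  have "T_word q k (ws @ [j]) = foldr ?F ws (op_mult k (T_gen q j) op_one)"
    by (simp add: T_word_def)
  then show ?thesis
    by (simp only: foldr_eq)
qed

lemma op_mult_T_gen_apply:
  fixes q :: "'a::field"
  assumes t: "t permutes {1..k}" and j: "1 \<le> j" "j < k"
  defines "c \<equiv> \<lambda>v::nat \<Rightarrow> 'a. (v (Suc j) - q * v j) / (v (Suc j) - v j)"
  shows "op_mult k A (T_gen q j) t w =
    A t w * (q - c (w \<circ> t)) + A (t \<circ> sigma j) w * c (w \<circ> (t \<circ> sigma j))"
proof -
  have summand: "A s w * T_gen q j (inv s \<circ> t) (w \<circ> s) =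
      (if s = t then A s w * (q - c (w \<circ> s)) else 0) +
      (if s = t \<circ> sigma j then A s w * c (w \<circ> s) else 0)"
    if "s \<in> perms k" for s
  proof -
    have "bij s"
      using that by (simp add: mem_perms_iff permutes_bij)
    then have iff: "inv s \<circ> t = id \<longleftrightarrow> s = t" "inv s \<circ> t = sigma j \<longleftrightarrow> s = t \<circ> sigma j"
      unfolding inv_comp_eq_iff[OF \<open>bij s\<close>] comp_id
      by (fastforce, metis comp_assoc comp_id sigma_comp_sigma)
    have "T_gen q j (inv s \<circ> t) (w \<circ> s) =
        (if inv s \<circ> t = id then q - c (w \<circ> s) else 0) + (if inv s \<circ> t = sigma j then c (w \<circ> s) else 0)"
      unfolding T_gen_def c_def Let_def ..
    then show ?thesis
      unfolding iff by (simp only: distrib_left if_distrib[of "times (A s w)"] mult_zero_right)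
  qed
  have "t \<in> perms k" "t \<circ> sigma j \<in> perms k"
    using t sigma_permutes[OF j] by (simp_all add: mem_perms_iff permutes_compose)
  have "op_mult k A (T_gen q j) t w = (\<Sum>s\<in>perms k.
      (if s = t then A s w * (q - c (w \<circ> s)) else 0) +
      (if s = t \<circ> sigma j then A s w * c (w \<circ> s) else 0))"
    unfolding op_mult_def by (rule sum.cong[OF refl summand])
  also have "\<dots> = A t w * (q - c (w \<circ> t)) + A (t \<circ> sigma j) w * c (w \<circ> (t \<circ> sigma j))"
    using \<open>t \<in> perms k\<close> \<open>t \<circ> sigma j \<in> perms k\<close>
    by (simp only: sum.distrib sum.delta[OF finite_perms] if_True)
  finally show ?thesis .
qed

lemma T_word_snoc_apply:
  fixes q :: "'a::field"
  assumes t: "t permutes {1..k}" and j: "1 \<le> j" "j < k"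
  shows "T_word q k (ws @ [j]) t w =
    T_word q k ws t w * (q - (w (t (Suc j)) - q * w (t j)) / (w (t (Suc j)) - w (t j)))
  + T_word q k ws (t \<circ> sigma j) w * ((w (t j) - q * w (t (Suc j))) / (w (t j) - w (t (Suc j))))"
proof -
  have "op_mult k (T_gen q j) op_one (inv s \<circ> t) v = T_gen q j (inv s \<circ> t) v" if "s \<in> perms k" for s v
    using that t by (intro op_mult_one_right) (simp add: mem_perms_iff permutes_compose permutes_inv)
  then have "T_word q k (ws @ [j]) t w = op_mult k (T_word q k ws) (T_gen q j) t w"
    unfolding T_word_snoc op_mult_def[of k "T_word q k ws"] by (intro sum.cong refl) simp
  also note op_mult_T_gen_apply[OF t j]
  finally show ?thesis
    by (simp only: comp_apply sigma_apply(1,2))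
qed

section \<open>Vertex weights and the Yang--Baxter equation\<close>

lemma sum_eq_single:
  assumes "finite C" "x \<in> C" "\<And>d. d \<in> C \<Longrightarrow> d \<noteq> x \<Longrightarrow> g d = 0"
  shows "sum g C = g x"
proof -
  have "sum g C = sum g {x}"
    using assms by (intro sum.mono_neutral_right) auto
  then show ?thesis
    by simp
qed

lemma Rw_conservation: "Rw q z a b c d \<noteq> 0 \<Longrightarrow> (c = a \<and> d = b) \<or> (c = b \<and> d = a)"
  unfolding Rw_def by (auto split: if_splits)

lemma sum_Rw_top:
  assumes "finite C" "a \<in> C" "b \<in> C"
  shows "(\<Sum>m\<in>C. Rw q z b a m u * f m) =
    Rw q z b a (if u = a then b else a) u * f (if u = a then b else a)"
  using assms by (subst sum_eq_single[of _ "if u = a then b else a"]) (auto dest: Rw_conservation split: if_split_asm)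

lemma sum_Rw_right:
  assumes "finite C" "a \<in> C" "b \<in> C"
  shows "(\<Sum>m\<in>C. Rw q z b a t m * f m) =
    Rw q z b a t (if t = b then a else b) * f (if t = b then a else b)"
  using assms by (subst sum_eq_single[of _ "if t = b then a else b"]) (auto dest: Rw_conservation split: if_split_asm)

lemma sum_Rw_out:
  assumes "finite C" "a \<in> C" "b \<in> C"
  shows "(\<Sum>c\<in>C. \<Sum>d\<in>C. Rw q z a b c d * f c d) =
    Rw q z a b a b * f a b + (if a \<noteq> b then Rw q z a b b a * f b a else 0)"
proof -
  have "(\<Sum>d\<in>C. Rw q z a b c d * f c d) =
      (if c = a then Rw q z a b a b * f a b else 0) + (if c = b \<and> a \<noteq> b then Rw q z a b b a * f b a else 0)"
    if "c \<in> C" for c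
    using assms by (subst sum_eq_single[of _ "if c = a then b else a"]) (auto dest: Rw_conservation split: if_split_asm)
  then show ?thesis
    using assms by (simp add: sum.distrib sum.delta' cong: sum.cong)
qed

lemma sum_Rw_in:
  assumes "finite C" "u \<in> C" "u' \<in> C"
  shows "(\<Sum>g\<in>C. \<Sum>h\<in>C. f g h * Rw q z g h u' u) =
    f u' u * Rw q z u' u u' u + (if u \<noteq> u' then f u u' * Rw q z u u' u' u else 0)"
proof -
  have "(\<Sum>h\<in>C. f g h * Rw q z g h u' u) =
      (if g = u' then f u' u * Rw q z u' u u' u else 0) + (if g = u \<and> u \<noteq> u' then f u u' * Rw q z u u' u' u else 0)"
    if "g \<in> C" for g
    using assms by (subst sum_eq_single[of _ "if g = u' then u else u'"]) (auto dest: Rw_conservation split: if_split_asm)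
  then show ?thesis
    using assms by (simp add: sum.distrib sum.delta' cong: sum.cong)
qed

text \<open>Clearing the common denominator \<open>z - q\<close> turns the weights into polynomials.\<close>

definition Rw_num :: "'a::field \<Rightarrow> 'a \<Rightarrow> nat \<Rightarrow> nat \<Rightarrow> nat \<Rightarrow> nat \<Rightarrow> 'a" where
  "Rw_num q z a b c d =
     (if a = b \<and> c = a \<and> d = a then z - q
      else if b < a \<and> c = a \<and> d = b then q * (z - 1)
      else if b < a \<and> c = b \<and> d = a then z * (1 - q)
      else if a < b \<and> c = a \<and> d = b then z - 1
      else if a < b \<and> c = b \<and> d = a then 1 - q
      else 0)"

lemma Rw_eq_Rw_num: "z - q \<noteq> 0 \<Longrightarrow> Rw q z a b c d = Rw_num q z a b c d / (z - q)"
  unfolding Rw_def Rw_num_def by auto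

lemma Rw_num_chain_nonzero:
  assumes "Rw_num q z x y m s * Rw_num q z' m c t s' \<noteq> 0"
  shows "(s, t, s') \<in> {(x, y, c), (x, c, y), (y, x, c), (y, c, x), (c, x, y), (c, y, x)}"
proof -
  have "Rw_num q z x y m s \<noteq> 0" "Rw_num q z' m c t s' \<noteq> 0"
    using assms by auto
  then have "(m = x \<and> s = y) \<or> (m = y \<and> s = x)" "(t = m \<and> s' = c) \<or> (t = c \<and> s' = m)"
    unfolding Rw_num_def by (auto split: if_splits)
  then show ?thesis
    by auto
qed

text \<open>By colour conservation both sides vanish unless \<open>(u, t0, u')\<close> is a permutation of
  \<open>(b0, b, a)\<close>; these cases are checked for every relative order of \<open>a, b, b0\<close>.\<close>

lemma yang_baxter_num:
  fixes q z1 z3 :: "'a::field" and a b b0 t0 u u' :: nat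
  defines "m1 \<equiv> if u = b then b0 else b" and "m2 \<equiv> if u = a then b0 else a"
    and "m3 \<equiv> if u' = a then b0 else a"
  shows "Rw_num q z1 a b a b * Rw_num q (z1 * z3) b0 b m1 u * Rw_num q z3 m1 a t0 u'
   + (if a \<noteq> b then Rw_num q z1 a b b a * Rw_num q (z1 * z3) b0 a m2 u * Rw_num q z3 m2 b t0 u' else 0)
   = Rw_num q z1 u' u u' u * Rw_num q (z1 * z3) m3 b t0 u * Rw_num q z3 b0 a m3 u'
   + (if u \<noteq> u' then Rw_num q z1 u u' u' u * Rw_num q (z1 * z3) m2 b t0 u' * Rw_num q z3 b0 a m2 u else 0)"
proof (cases "(u, t0, u') \<in> {(b0, b, a), (b0, a, b), (b, b0, a), (b, a, b0), (a, b0, b), (a, b, b0)}")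
  case True
  then show ?thesis
    unfolding m1_def m2_def m3_def
    by (elim insertE emptyE;
        cases a b rule: linorder_cases; cases a b0 rule: linorder_cases; cases b b0 rule: linorder_cases;
        simp add: Rw_num_def algebra_simps)
next
  case False
  have "Rw_num q (z1 * z3) b0 b m1 u * Rw_num q z3 m1 a t0 u' = 0"
    using False Rw_num_chain_nonzero[of q "z1 * z3" b0 b m1 u z3 a t0 u'] by blast
  moreover have "Rw_num q (z1 * z3) b0 a m2 u * Rw_num q z3 m2 b t0 u' = 0"
    using False Rw_num_chain_nonzero[of q "z1 * z3" b0 a m2 u z3 b t0 u'] by blast
  moreover have "Rw_num q (z1 * z3) m3 b t0 u * Rw_num q z3 b0 a m3 u' = 0"
    using False Rw_num_chain_nonzero[of q z3 b0 a m3 u' "z1 * z3" b t0 u]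
    by (subst mult.commute) blast
  moreover have "Rw_num q (z1 * z3) m2 b t0 u' * Rw_num q z3 b0 a m2 u = 0"
    using False Rw_num_chain_nonzero[of q z3 b0 a m2 u "z1 * z3" b t0 u']
    by (subst mult.commute) blast
  ultimately show ?thesis
    by (simp only: mult.assoc mult_zero_right add_0_right if_cancel)
qed

lemma yang_baxter_lhs_collapse:
  fixes a b b0 t0 u u' :: nat
  assumes C: "finite C" "a \<in> C" "b \<in> C" "b0 \<in> C"
  defines "m1 \<equiv> if u = b then b0 else b" and "m2 \<equiv> if u = a then b0 else a"
  shows "(\<Sum>c\<in>C. \<Sum>d\<in>C. \<Sum>m\<in>C. Rw q z1 a b c d * (Rw q z2 b0 d m u * Rw q z3 m c t0 u')) =
     Rw q z1 a b a b * (Rw q z2 b0 b m1 u * Rw q z3 m1 a t0 u')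
   + (if a \<noteq> b then Rw q z1 a b b a * (Rw q z2 b0 a m2 u * Rw q z3 m2 b t0 u') else 0)"
proof -
  let ?F = "\<lambda>c d. Rw q z2 b0 d (if u = d then b0 else d) u * Rw q z3 (if u = d then b0 else d) c t0 u'"
  have "(\<Sum>m\<in>C. Rw q z1 a b c d * (Rw q z2 b0 d m u * Rw q z3 m c t0 u')) = Rw q z1 a b c d * ?F c d"
    if "d \<in> C" for c d
    using sum_Rw_top[OF C(1) that C(4), of q z2 u "\<lambda>m. Rw q z3 m c t0 u'"]
    by (simp add: sum_distrib_left[symmetric])
  then have "(\<Sum>c\<in>C. \<Sum>d\<in>C. \<Sum>m\<in>C. Rw q z1 a b c d * (Rw q z2 b0 d m u * Rw q z3 m c t0 u')) =
      (\<Sum>c\<in>C. \<Sum>d\<in>C. Rw q z1 a b c d * ?F c d)"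
    by simp
  also have "\<dots> = Rw q z1 a b a b * ?F a b + (if a \<noteq> b then Rw q z1 a b b a * ?F b a else 0)"
    by (rule sum_Rw_out[OF C(1-3)])
  finally show ?thesis
    unfolding m1_def m2_def .
qed

lemma yang_baxter_rhs_collapse:
  fixes a b b0 t0 u u' :: nat
  assumes C: "finite C" "a \<in> C" "b0 \<in> C" "u \<in> C" "u' \<in> C"
  defines "m2 \<equiv> if u = a then b0 else a" and "m3 \<equiv> if u' = a then b0 else a"
  shows "(\<Sum>g\<in>C. \<Sum>h\<in>C. (\<Sum>m\<in>C. Rw q z3 b0 a m g * Rw q z2 m b t0 h) * Rw q z1 g h u' u) =
     (Rw q z3 b0 a m3 u' * Rw q z2 m3 b t0 u) * Rw q z1 u' u u' u
   + (if u \<noteq> u' then (Rw q z3 b0 a m2 u * Rw q z2 m2 b t0 u') * Rw q z1 u u' u' u else 0)"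
proof -
  let ?F = "\<lambda>g h. Rw q z3 b0 a (if g = a then b0 else a) g * Rw q z2 (if g = a then b0 else a) b t0 h"
  have "(\<Sum>m\<in>C. Rw q z3 b0 a m g * Rw q z2 m b t0 h) = ?F g h" for g h
    by (rule sum_Rw_top[OF C(1-3)])
  then have "(\<Sum>g\<in>C. \<Sum>h\<in>C. (\<Sum>m\<in>C. Rw q z3 b0 a m g * Rw q z2 m b t0 h) * Rw q z1 g h u' u) =
      (\<Sum>g\<in>C. \<Sum>h\<in>C. ?F g h * Rw q z1 g h u' u)"
    by simp
  also have "\<dots> = ?F u' u * Rw q z1 u' u u' u + (if u \<noteq> u' then ?F u u' * Rw q z1 u u' u' u else 0)"
    by (rule sum_Rw_in[OF C(1,4,5)])
  finally show ?thesis
    unfolding m2_def m3_def .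
qed

theorem yang_baxter:
  fixes q z1 z3 :: "'a::field"
  assumes C: "finite C" "a \<in> C" "b \<in> C" "b0 \<in> C" "u \<in> C" "u' \<in> C"
    and nz: "z1 - q \<noteq> 0" "z1 * z3 - q \<noteq> 0" "z3 - q \<noteq> 0"
  shows "(\<Sum>c\<in>C. \<Sum>d\<in>C. \<Sum>m\<in>C. Rw q z1 a b c d * (Rw q (z1 * z3) b0 d m u * Rw q z3 m c t0 u')) =
         (\<Sum>g\<in>C. \<Sum>h\<in>C. (\<Sum>m\<in>C. Rw q z3 b0 a m g * Rw q (z1 * z3) m b t0 h) * Rw q z1 g h u' u)"
proof -
  let ?D = "(z1 - q) * (z1 * z3 - q) * (z3 - q)"
  have quot: "A / d1 * (B / d2 * (C / d3)) = A * B * C / (d1 * d2 * d3)"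
    "C / d3 * (B / d2) * (A / d1) = A * B * C / (d1 * d2 * d3)"
    "(if P then X / d1 else 0) = (if P then X else 0) / d1"
    for A B C X d1 d2 d3 :: 'a and P
    by (simp_all add: ac_simps)
  note num = Rw_eq_Rw_num[OF nz(1)] Rw_eq_Rw_num[OF nz(2)] Rw_eq_Rw_num[OF nz(3)]
  show ?thesis
    unfolding yang_baxter_lhs_collapse[OF C(1-4)] yang_baxter_rhs_collapse[OF C(1,2,4-6)]
    by (simp only: num quot add_divide_distrib[symmetric] yang_baxter_num)
qed

section \<open>Row and lattice partition functions\<close>

text \<open>\<open>row_pf q K Y x a B A c n e\<close> is the partition function of the row segment formed by the
  columns \<open>c, \<dots>, c + n - 1\<close>: row rapidity \<open>x\<close>, column rapidities \<open>Y\<close>, bottom colours \<open>B\<close>,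
  top colours \<open>A\<close>, incoming colour \<open>a\<close> on the left, outgoing colour \<open>e\<close> on the right,
  all colours in \<open>{0..K}\<close>.\<close>

fun row_pf :: "'a::field \<Rightarrow> nat \<Rightarrow> (nat \<Rightarrow> 'a) \<Rightarrow> 'a \<Rightarrow> nat \<Rightarrow> (nat \<Rightarrow> nat) \<Rightarrow> (nat \<Rightarrow> nat) \<Rightarrow>
    nat \<Rightarrow> nat \<Rightarrow> nat \<Rightarrow> 'a" where
  "row_pf q K Y x a B A c 0 e = (if a = e then 1 else 0)"
| "row_pf q K Y x a B A c (Suc n) e =
    (\<Sum>m\<in>{0..K}. Rw q (x / Y c) (B c) a (A c) m * row_pf q K Y x m B A (Suc c) n e)"

lemma row_pf_cong:
  "(\<And>j. c \<le> j \<Longrightarrow> j < c + n \<Longrightarrow> B j = B' j \<and> A j = A' j) \<Longrightarrow>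
    row_pf q K Y x a B A c n e = row_pf q K Y x a B' A' c n e"
proof (induction n arbitrary: a c)
  case (Suc n)
  have "B c = B' c" "A c = A' c"
    using Suc.prems[of c] by auto
  moreover have "row_pf q K Y x m B A (Suc c) n e = row_pf q K Y x m B' A' (Suc c) n e" for m
    using Suc.prems by (intro Suc.IH) auto
  ultimately show ?case
    by simp
qed simp

lemma sum_PiE_insert:
  assumes "x \<notin> A"
  shows "(\<Sum>g\<in>PiE (insert x A) T. F g) = (\<Sum>y\<in>T x. \<Sum>g\<in>PiE A T. F (g(x := y)))"
  unfolding PiE_insert_eq sum.reindex[OF inj_combinator[OF assms]]
  by (simp add: sum.cartesian_product prod.case_distrib)

lemma sum_rotate4: "(\<Sum>a\<in>A. \<Sum>b\<in>B. \<Sum>c\<in>C. \<Sum>d\<in>D. f a b c d) = (\<Sum>b\<in>B. \<Sum>c\<in>C. \<Sum>d\<in>D. \<Sum>a\<in>A. f a b c d)"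
proof -
  have "(\<Sum>a\<in>A. \<Sum>b\<in>B. \<Sum>c\<in>C. \<Sum>d\<in>D. f a b c d) = (\<Sum>b\<in>B. \<Sum>a\<in>A. \<Sum>c\<in>C. \<Sum>d\<in>D. f a b c d)"
    by (rule sum.swap)
  also have "\<dots> = (\<Sum>b\<in>B. \<Sum>c\<in>C. \<Sum>a\<in>A. \<Sum>d\<in>D. f a b c d)"
    by (rule sum.cong[OF refl], rule sum.swap)
  also have "\<dots> = (\<Sum>b\<in>B. \<Sum>c\<in>C. \<Sum>d\<in>D. \<Sum>a\<in>A. f a b c d)"
    by (rule sum.cong[OF refl], rule sum.cong[OF refl], rule sum.swap)
  finally show ?thesis .
qed

definition two_row_pf :: "'a::field \<Rightarrow> nat \<Rightarrow> (nat \<Rightarrow> 'a) \<Rightarrow> 'a \<Rightarrow> 'a \<Rightarrow> nat \<Rightarrow> nat \<Rightarrow>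
    (nat \<Rightarrow> nat) \<Rightarrow> (nat \<Rightarrow> nat) \<Rightarrow> nat \<Rightarrow> nat \<Rightarrow> nat \<Rightarrow> nat \<Rightarrow> 'a" where
  "two_row_pf q K Y x y a b B T c n e f =
    (\<Sum>M\<in>PiE {c..<c+n} (\<lambda>_. {0..K}). row_pf q K Y x a B M c n e * row_pf q K Y y b M T c n f)"

lemma two_row_pf_0:
  "two_row_pf q K Y x y a b B T c 0 e f = (if a = e then 1 else 0) * (if b = f then 1 else 0)"
  unfolding two_row_pf_def by simp

lemma two_row_pf_Suc:
  "two_row_pf q K Y x y a b B T c (Suc n) e f =
    (\<Sum>u\<in>{0..K}. \<Sum>u'\<in>{0..K}. (\<Sum>m\<in>{0..K}. Rw q (x / Y c) (B c) a m u * Rw q (y / Y c) m b (T c) u') *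
      two_row_pf q K Y x y u u' B T (Suc c) n e f)"
proof -
  let ?C = "{0..K}" and ?P = "PiE {Suc c..<Suc c + n} (\<lambda>_. {0..K})"
  let ?V = "\<lambda>m u u'. Rw q (x / Y c) (B c) a m u * Rw q (y / Y c) m b (T c) u'"
  let ?rows = "\<lambda>u u' M. row_pf q K Y x u B M (Suc c) n e * row_pf q K Y y u' M T (Suc c) n f"
  have "row_pf q K Y x u B (M(c := m)) (Suc c) n e = row_pf q K Y x u B M (Suc c) n e"
    "row_pf q K Y y u' (M(c := m)) T (Suc c) n f = row_pf q K Y y u' M T (Suc c) n f" for M m u u'
    by (rule row_pf_cong; simp)+
  then have first_column: "row_pf q K Y x a B (M(c := m)) c (Suc n) e * row_pf q K Y y b (M(c := m)) T c (Suc n) f =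
      (\<Sum>u\<in>?C. \<Sum>u'\<in>?C. ?V m u u' * ?rows u u' M)" for M m
    by (simp add: sum_product ac_simps)
  have "{c..<c + Suc n} = insert c {Suc c..<Suc c + n}"
    by auto
  then have "two_row_pf q K Y x y a b B T c (Suc n) e f = (\<Sum>m\<in>?C. \<Sum>M\<in>?P. \<Sum>u\<in>?C. \<Sum>u'\<in>?C. ?V m u u' * ?rows u u' M)"
    unfolding two_row_pf_def first_column[symmetric] by (simp add: sum_PiE_insert)
  also have "\<dots> = (\<Sum>u\<in>?C. \<Sum>u'\<in>?C. \<Sum>m\<in>?C. \<Sum>M\<in>?P. ?V m u u' * ?rows u u' M)"
    by (subst sum_rotate4) (rule sum_rotate4)
  also have "\<dots> = (\<Sum>u\<in>?C. \<Sum>u'\<in>?C. (\<Sum>m\<in>?C. ?V m u u') * two_row_pf q K Y x y u u' B T (Suc c) n e f)"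
    unfolding two_row_pf_def by (intro sum.cong refl) (simp only: sum_product)
  finally show ?thesis .
qed

lemma sum_swap_pairs: "(\<Sum>i\<in>A. \<Sum>j\<in>B. \<Sum>k\<in>C. \<Sum>l\<in>D. f i j k l) = (\<Sum>k\<in>C. \<Sum>l\<in>D. \<Sum>i\<in>A. \<Sum>j\<in>B. f i j k l)"
proof -
  have "(\<Sum>i\<in>A. \<Sum>j\<in>B. \<Sum>k\<in>C. \<Sum>l\<in>D. f i j k l) = (\<Sum>i\<in>A. \<Sum>k\<in>C. \<Sum>l\<in>D. \<Sum>j\<in>B. f i j k l)"
    by (intro sum.cong refl, subst sum.swap, rule sum.cong[OF refl], rule sum.swap)
  also have "\<dots> = (\<Sum>k\<in>C. \<Sum>l\<in>D. \<Sum>i\<in>A. \<Sum>j\<in>B. f i j k l)"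
    by (subst sum.swap, rule sum.cong[OF refl], rule sum.swap)
  finally show ?thesis .
qed

text \<open>The train argument: the cross \<open>R_(x/y)\<close> attached on the left of two stacked rows is moved
  column by column to their right end by the Yang--Baxter equation, exchanging the rapidities of the rows.\<close>

lemma two_row_pf_train:
  fixes q x y :: "'a::field" and Y :: "nat \<Rightarrow> 'a"
  assumes nz: "y \<noteq> 0" "x/y - q \<noteq> 0" "\<And>j. c \<le> j \<Longrightarrow> j < c+n \<Longrightarrow> Y j \<noteq> 0 \<and> x / Y j - q \<noteq> 0 \<and> y / Y j - q \<noteq> 0"
    and col: "a \<le> K" "b \<le> K" "e \<le> K" "f \<le> K" "\<And>j. c \<le> j \<Longrightarrow> j < c+n \<Longrightarrow> B j \<le> K \<and> T j \<le> K"
  shows "(\<Sum>c'\<in>{0..K}. \<Sum>d\<in>{0..K}. Rw q (x/y) a b c' d * two_row_pf q K Y x y d c' B T c n e f) =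
         (\<Sum>e'\<in>{0..K}. \<Sum>f'\<in>{0..K}. two_row_pf q K Y y x a b B T c n e' f' * Rw q (x/y) e' f' f e)"
  using nz(3) col
proof (induction n arbitrary: a b c)
  case 0
  have "(\<Sum>c'\<in>{0..K}. \<Sum>d\<in>{0..K}. Rw q (x/y) a b c' d * two_row_pf q K Y x y d c' B T c 0 e f) = Rw q (x/y) a b f e"
  proof -
    have "(\<Sum>d\<in>{0..K}. Rw q (x/y) a b c' d * two_row_pf q K Y x y d c' B T c 0 e f) = (if c' = f then Rw q (x/y) a b c' e else 0)" for c'
      using 0 by (subst sum_eq_single[of _ e]) (auto simp: two_row_pf_0)
    then show ?thesis using 0 by (simp add: sum.delta')
  qed
  moreover have "(\<Sum>e'\<in>{0..K}. \<Sum>f'\<in>{0..K}. two_row_pf q K Y y x a b B T c 0 e' f' * Rw q (x/y) e' f' f e) = Rw q (x/y) a b f e"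
  proof -
    have "(\<Sum>f'\<in>{0..K}. two_row_pf q K Y y x a b B T c 0 e' f' * Rw q (x/y) e' f' f e) = (if e' = a then Rw q (x/y) e' b f e else 0)" for e'
      using 0 by (subst sum_eq_single[of _ b]) (auto simp: two_row_pf_0)
    then show ?thesis using 0 by (simp add: sum.delta')
  qed
  ultimately show ?case by simp
next
  case (Suc n)
  let ?C = "{0..K}"
  let ?z1 = "x / y" and ?z3 = "y / Y c"
  have Yc: "Y c \<noteq> 0" "x / Y c - q \<noteq> 0" "y / Y c - q \<noteq> 0" using Suc.prems(1)[of c] by auto
  have zz: "?z1 * ?z3 = x / Y c" using nz(1) by simp
  have BT: "B c \<le> K" "T c \<le> K" using Suc.prems(6)[of c] by auto
  define G where "G g h = (\<Sum>m\<in>?C. Rw q ?z3 (B c) a m g * Rw q (x / Y c) m b (T c) h)" for g h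
  define Dxy where "Dxy u u' = two_row_pf q K Y x y u u' B T (Suc c) n e f" for u u'
  define Dyx where "Dyx g h e' f' = two_row_pf q K Y y x g h B T (Suc c) n e' f'" for g h e' f'
  have IH: "(\<Sum>c'\<in>?C. \<Sum>d\<in>?C. Rw q (x/y) g h c' d * Dxy d c') = (\<Sum>e'\<in>?C. \<Sum>f'\<in>?C. Dyx g h e' f' * Rw q (x/y) e' f' f e)"
    if "g \<le> K" "h \<le> K" for g h
    unfolding Dxy_def Dyx_def using Suc.prems that by (intro Suc.IH) auto
  have "(\<Sum>c'\<in>?C. \<Sum>d\<in>?C. Rw q (x/y) a b c' d * two_row_pf q K Y x y d c' B T c (Suc n) e f) =
        (\<Sum>c'\<in>?C. \<Sum>d\<in>?C. \<Sum>u\<in>?C. \<Sum>u'\<in>?C. Rw q (x/y) a b c' d * ((\<Sum>m\<in>?C. Rw q (x / Y c) (B c) d m u * Rw q (y / Y c) m c' (T c) u') * Dxy u u'))"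
    unfolding two_row_pf_Suc Dxy_def by (simp add: sum_distrib_left)
  also have "\<dots> = (\<Sum>u\<in>?C. \<Sum>u'\<in>?C. \<Sum>c'\<in>?C. \<Sum>d\<in>?C. Rw q (x/y) a b c' d * ((\<Sum>m\<in>?C. Rw q (x / Y c) (B c) d m u * Rw q (y / Y c) m c' (T c) u') * Dxy u u'))"
    by (rule sum_swap_pairs)
  also have "\<dots> = (\<Sum>u\<in>?C. \<Sum>u'\<in>?C. (\<Sum>c'\<in>?C. \<Sum>d\<in>?C. \<Sum>m\<in>?C. Rw q ?z1 a b c' d * (Rw q (?z1 * ?z3) (B c) d m u * Rw q ?z3 m c' (T c) u')) * Dxy u u')"
    unfolding zz by (simp add: sum_distrib_left sum_distrib_right ac_simps)
  also have "\<dots> = (\<Sum>u\<in>?C. \<Sum>u'\<in>?C. (\<Sum>g\<in>?C. \<Sum>h\<in>?C. (\<Sum>m\<in>?C. Rw q ?z3 (B c) a m g * Rw q (?z1 * ?z3) m b (T c) h) * Rw q ?z1 g h u' u) * Dxy u u')"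
    using Suc.prems BT Yc nz zz by (intro sum.cong refl arg_cong2[where f = times] yang_baxter) auto
  also have "\<dots> = (\<Sum>u\<in>?C. \<Sum>u'\<in>?C. \<Sum>g\<in>?C. \<Sum>h\<in>?C. G g h * (Rw q ?z1 g h u' u * Dxy u u'))"
    unfolding zz G_def by (simp add: sum_distrib_left sum_distrib_right ac_simps)
  also have "\<dots> = (\<Sum>g\<in>?C. \<Sum>h\<in>?C. \<Sum>u\<in>?C. \<Sum>u'\<in>?C. G g h * (Rw q ?z1 g h u' u * Dxy u u'))"
    by (rule sum_swap_pairs)
  also have "\<dots> = (\<Sum>g\<in>?C. \<Sum>h\<in>?C. G g h * (\<Sum>c'\<in>?C. \<Sum>d\<in>?C. Rw q ?z1 g h c' d * Dxy d c'))"
    by (intro sum.cong refl) (simp add: sum_distrib_left, rule sum.swap)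
  also have "\<dots> = (\<Sum>g\<in>?C. \<Sum>h\<in>?C. G g h * (\<Sum>e'\<in>?C. \<Sum>f'\<in>?C. Dyx g h e' f' * Rw q (x/y) e' f' f e))"
    using IH by (intro sum.cong refl) auto
  also have "\<dots> = (\<Sum>g\<in>?C. \<Sum>h\<in>?C. \<Sum>e'\<in>?C. \<Sum>f'\<in>?C. G g h * (Dyx g h e' f' * Rw q (x/y) e' f' f e))"
    by (simp add: sum_distrib_left)
  also have "\<dots> = (\<Sum>e'\<in>?C. \<Sum>f'\<in>?C. \<Sum>g\<in>?C. \<Sum>h\<in>?C. G g h * (Dyx g h e' f' * Rw q (x/y) e' f' f e))"
    by (rule sum_swap_pairs)
  also have "\<dots> = (\<Sum>e'\<in>?C. \<Sum>f'\<in>?C. two_row_pf q K Y y x a b B T c (Suc n) e' f' * Rw q (x/y) e' f' f e)"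
    unfolding two_row_pf_Suc G_def Dyx_def by (simp add: sum_distrib_left sum_distrib_right ac_simps)
  finally show ?case .
qed

text \<open>\<open>lattice_pf q K k Y X P T B r n\<close> is the partition function of the rows \<open>r, \<dots>, r + n - 1\<close>
  (bottom to top) over the columns \<open>1, \<dots>, k\<close>: row \<open>i\<close> has rapidity \<open>X i\<close> and incoming colour
  \<open>P i\<close>, all outgoing colours on the right are \<open>0\<close>, \<open>B\<close> enters at the bottom and \<open>T\<close> leaves
  at the top.\<close>

fun lattice_pf :: "'a::field \<Rightarrow> nat \<Rightarrow> nat \<Rightarrow> (nat \<Rightarrow> 'a) \<Rightarrow> (nat \<Rightarrow> 'a) \<Rightarrow> (nat \<Rightarrow> nat) \<Rightarrow>
    (nat \<Rightarrow> nat) \<Rightarrow> (nat \<Rightarrow> nat) \<Rightarrow> nat \<Rightarrow> nat \<Rightarrow> 'a" where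
  "lattice_pf q K k Y X P T B r 0 = (if \<forall>c\<in>{1..k}. B c = T c then 1 else 0)"
| "lattice_pf q K k Y X P T B r (Suc n) = (\<Sum>M\<in>PiE {1..k} (\<lambda>_. {0..K}).
    row_pf q K Y (X r) (P r) B M 1 k 0 * lattice_pf q K k Y X P T M (Suc r) n)"

lemma lattice_pf_cong:
  "(\<And>i. r \<le> i \<Longrightarrow> X i = X' i \<and> P i = P' i) \<Longrightarrow>
    lattice_pf q K k Y X P T B r n = lattice_pf q K k Y X' P' T B r n"
proof (induction n arbitrary: r B)
  case (Suc n)
  have "X r = X' r" "P r = P' r"
    using Suc.prems[of r] by auto
  moreover have "lattice_pf q K k Y X P T M (Suc r) n = lattice_pf q K k Y X' P' T M (Suc r) n" for M
    using Suc.prems by (intro Suc.IH) auto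
  ultimately show ?case
    by simp
qed simp

lemma two_row_pf_exchange:
  fixes q x y :: "'a::field" and Y :: "nat \<Rightarrow> 'a"
  assumes nz: "y \<noteq> 0" "x / y - q \<noteq> 0"
      "\<And>c. 1 \<le> c \<Longrightarrow> c \<le> k \<Longrightarrow> Y c \<noteq> 0 \<and> x / Y c - q \<noteq> 0 \<and> y / Y c - q \<noteq> 0"
    and col: "a \<le> K" "b \<le> K" "\<And>c. 1 \<le> c \<Longrightarrow> c \<le> k \<Longrightarrow> B c \<le> K \<and> T c \<le> K"
  shows "two_row_pf q K Y y x a b B T 1 k 0 0 =
    (\<Sum>c'\<in>{0..K}. \<Sum>d\<in>{0..K}. Rw q (x / y) a b c' d * two_row_pf q K Y x y d c' B T 1 k 0 0)"
proof -
  have "(\<Sum>c'\<in>{0..K}. \<Sum>d\<in>{0..K}. Rw q (x / y) a b c' d * two_row_pf q K Y x y d c' B T 1 k 0 0) =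
      (\<Sum>e'\<in>{0..K}. \<Sum>f'\<in>{0..K}. two_row_pf q K Y y x a b B T 1 k e' f' * Rw q (x / y) e' f' 0 0)"
    using nz col by (intro two_row_pf_train) auto
  also have "\<dots> = two_row_pf q K Y y x a b B T 1 k 0 0"
    by (subst sum_Rw_in) (auto simp: Rw_def)
  finally show ?thesis
    by simp
qed

lemma lattice_pf_swap_first_rows:
  fixes q :: "'a::field" and X Y :: "nat \<Rightarrow> 'a"
  assumes nz: "X (Suc j) \<noteq> 0" "X j / X (Suc j) - q \<noteq> 0"
       "\<And>c. 1 \<le> c \<Longrightarrow> c \<le> k \<Longrightarrow> Y c \<noteq> 0 \<and> X j / Y c - q \<noteq> 0 \<and> X (Suc j) / Y c - q \<noteq> 0"
    and col: "P j \<le> K" "P (Suc j) \<le> K" "\<And>c. 1 \<le> c \<Longrightarrow> c \<le> k \<Longrightarrow> B c \<le> K"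
  shows "lattice_pf q K k Y (\<lambda>i. X (sigma j i)) P T B j (Suc (Suc n)) =
    (\<Sum>c'\<in>{0..K}. \<Sum>d\<in>{0..K}. Rw q (X j / X (Suc j)) (P j) (P (Suc j)) c' d *
      lattice_pf q K k Y X (P(j := d, Suc j := c')) T B j (Suc (Suc n)))"
proof -
  let ?PM = "PiE {1..k} (\<lambda>_. {0..K})" and ?x = "X j" and ?y = "X (Suc j)"
  let ?R = "Rw q (?x / ?y) (P j) (P (Suc j))"
  define L where "L M' = lattice_pf q K k Y X P T M' (Suc (Suc j)) n" for M'
  have L: "lattice_pf q K k Y (\<lambda>i. X (sigma j i)) P T M' (Suc (Suc j)) n = L M'"
    "lattice_pf q K k Y X (P(j := d, Suc j := c')) T M' (Suc (Suc j)) n = L M'" for M' c' d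
    unfolding L_def by (rule lattice_pf_cong; simp add: sigma_apply)+
  have two_rows: "two_row_pf q K Y u v a b B M' 1 k 0 0 =
      (\<Sum>M\<in>?PM. row_pf q K Y u a B M 1 k 0 * row_pf q K Y v b M M' 1 k 0)" for u v a b M'
    unfolding two_row_pf_def by (simp add: atLeastLessThanSuc_atLeastAtMost)
  have "lattice_pf q K k Y (\<lambda>i. X (sigma j i)) P T B j (Suc (Suc n)) =
      (\<Sum>M'\<in>?PM. two_row_pf q K Y ?y ?x (P j) (P (Suc j)) B M' 1 k 0 0 * L M')"
    unfolding two_rows by (simp add: sigma_apply L sum_distrib_left sum_distrib_right ac_simps) (rule sum.swap)
  also have "\<dots> = (\<Sum>M'\<in>?PM. (\<Sum>c'\<in>{0..K}. \<Sum>d\<in>{0..K}. ?R c' d * two_row_pf q K Y ?x ?y d c' B M' 1 k 0 0) * L M')"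
    using nz col by (intro sum.cong refl arg_cong2[where f = times] two_row_pf_exchange) (auto simp: PiE_iff)
  also have "\<dots> = (\<Sum>c'\<in>{0..K}. \<Sum>d\<in>{0..K}. ?R c' d *
      lattice_pf q K k Y X (P(j := d, Suc j := c')) T B j (Suc (Suc n)))"
    unfolding two_rows by (simp add: L sum_distrib_left sum_distrib_right ac_simps) (rule sum_rotate4)
  finally show ?thesis .
qed

lemma lattice_pf_swap_rows:
  fixes q :: "'a::field" and X Y :: "nat \<Rightarrow> 'a"
  assumes "r \<le> j" "Suc j < r + n"
    and nz: "X (Suc j) \<noteq> 0" "X j / X (Suc j) - q \<noteq> 0"
       "\<And>c. 1 \<le> c \<Longrightarrow> c \<le> k \<Longrightarrow> Y c \<noteq> 0 \<and> X j / Y c - q \<noteq> 0 \<and> X (Suc j) / Y c - q \<noteq> 0"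
    and col: "P j \<le> K" "P (Suc j) \<le> K" "\<And>c. 1 \<le> c \<Longrightarrow> c \<le> k \<Longrightarrow> B c \<le> K"
  shows "lattice_pf q K k Y (\<lambda>i. X (sigma j i)) P T B r n =
    (\<Sum>c'\<in>{0..K}. \<Sum>d\<in>{0..K}. Rw q (X j / X (Suc j)) (P j) (P (Suc j)) c' d *
      lattice_pf q K k Y X (P(j := d, Suc j := c')) T B r n)"
  using assms(1,2) col(3)
proof (induction n arbitrary: r B)
  case (Suc n)
  let ?PM = "PiE {1..k} (\<lambda>_. {0..K})"
  let ?R = "Rw q (X j / X (Suc j)) (P j) (P (Suc j))"
  show ?case
  proof (cases "r < j")
    case True
    have IH: "lattice_pf q K k Y (\<lambda>i. X (sigma j i)) P T M (Suc r) n =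
        (\<Sum>c'\<in>{0..K}. \<Sum>d\<in>{0..K}. ?R c' d * lattice_pf q K k Y X (P(j := d, Suc j := c')) T M (Suc r) n)"
      if "M \<in> ?PM" for M
      using Suc.prems True that by (intro Suc.IH) (auto simp: PiE_iff)
    have sr: "sigma j r = r" and Pr: "(P(j := d, Suc j := c')) r = P r" for c' d
      using True by (auto simp: sigma_apply)
    have "lattice_pf q K k Y (\<lambda>i. X (sigma j i)) P T B r (Suc n) = (\<Sum>M\<in>?PM. \<Sum>c'\<in>{0..K}. \<Sum>d\<in>{0..K}.
        ?R c' d * (row_pf q K Y (X r) (P r) B M 1 k 0 * lattice_pf q K k Y X (P(j := d, Suc j := c')) T M (Suc r) n))"
      using IH by (simp add: sr sum_distrib_left ac_simps)
    also have "\<dots> = (\<Sum>c'\<in>{0..K}. \<Sum>d\<in>{0..K}. \<Sum>M\<in>?PM.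
        ?R c' d * (row_pf q K Y (X r) (P r) B M 1 k 0 * lattice_pf q K k Y X (P(j := d, Suc j := c')) T M (Suc r) n))"
      by (subst sum.swap, rule sum.cong[OF refl], rule sum.swap)
    finally show ?thesis
      by (simp only: lattice_pf.simps Pr sum_distrib_left)
  next
    case False
    then obtain n' where "r = j" "n = Suc n'"
      using Suc.prems by (cases n) auto
    then show ?thesis
      using lattice_pf_swap_first_rows[OF nz col(1,2) Suc.prems(3)] by (simp only:)
  qed
qed simp

lemma row_pf_eq_sum_prod:
  assumes "1 \<le> n" "e \<le> K"
  shows "row_pf q K Y x a B A c n e = (\<Sum>g\<in>PiE {c..<c+n-1} (\<lambda>_. {0..K}).
     \<Prod>j\<in>{c..<c+n}. Rw q (x / Y j) (B j) (if j = c then a else g (j-1)) (A j) (if j = c+n-1 then e else g j))"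
  using assms(1)
proof (induction n arbitrary: a c rule: nat_induct_at_least)
  case base
  have "row_pf q K Y x a B A c 1 e = Rw q (x / Y c) (B c) a (A c) e"
    using assms(2) by (simp add: sum.delta' if_distrib[of "\<lambda>t. _ * t"] cong: if_cong)
  then show ?case by simp
next
  case (Suc n)
  let ?F = "\<lambda>g j. Rw q (x / Y j) (B j) (if j = c then a else g (j-1)) (A j) (if j = c + Suc n - 1 then e else g j)"
  let ?G = "\<lambda>m g j. Rw q (x / Y j) (B j) (if j = Suc c then m else g (j-1)) (A j) (if j = Suc c + n - 1 then e else g j)"
  have "?F (g(c := m)) c = Rw q (x / Y c) (B c) a (A c) m"
    "(\<Prod>j\<in>{Suc c..<Suc c + n}. ?F (g(c := m)) j) = (\<Prod>j\<in>{Suc c..<Suc c + n}. ?G m g j)" for g m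
    using Suc.hyps by (auto intro!: prod.cong)
  moreover have "(\<Prod>j\<in>insert c {Suc c..<Suc c + n}. ?F g' j) = ?F g' c * (\<Prod>j\<in>{Suc c..<Suc c + n}. ?F g' j)" for g'
    by (rule prod.insert) auto
  ultimately have first: "(\<Prod>j\<in>insert c {Suc c..<Suc c + n}. ?F (g(c := m)) j) =
      Rw q (x / Y c) (B c) a (A c) m * (\<Prod>j\<in>{Suc c..<Suc c + n}. ?G m g j)" for g m
    by (simp only:)
  have ivl: "{c..<c + Suc n - 1} = insert c {Suc c..<Suc c + n - 1}" "{c..<c + Suc n} = insert c {Suc c..<Suc c + n}"
    using Suc.hyps by auto
  have "(\<Sum>g\<in>PiE {c..<c + Suc n - 1} (\<lambda>_. {0..K}). \<Prod>j\<in>{c..<c + Suc n}. ?F g j) =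
      (\<Sum>m\<in>{0..K}. \<Sum>g\<in>PiE {Suc c..<Suc c + n - 1} (\<lambda>_. {0..K}). \<Prod>j\<in>insert c {Suc c..<Suc c + n}. ?F (g(c := m)) j)"
    unfolding ivl by (rule sum_PiE_insert) simp
  also have "\<dots> = (\<Sum>m\<in>{0..K}. Rw q (x / Y c) (B c) a (A c) m *
      (\<Sum>g\<in>PiE {Suc c..<Suc c + n - 1} (\<lambda>_. {0..K}). \<Prod>j\<in>{Suc c..<Suc c + n}. ?G m g j))"
    unfolding first sum_distrib_left ..
  also have "\<dots> = row_pf q K Y x a B A c (Suc n) e"
    using Suc.IH by simp
  finally show ?case
    by simp
qed

lemma sum_PiE_Times_curry:
  "(\<Sum>h\<in>PiE (A \<times> B) (\<lambda>_. S). F h) = (\<Sum>H\<in>PiE A (\<lambda>_. PiE B (\<lambda>_. S)). F (\<lambda>(a, b). if a \<in> A \<and> b \<in> B then H a b else undefined))"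
proof -
  let ?i = "\<lambda>H. (\<lambda>(a, b). if a \<in> A \<and> b \<in> B then H a b else undefined)"
  let ?j = "\<lambda>h. (\<lambda>a. if a \<in> A then (\<lambda>b. if b \<in> B then h (a, b) else undefined) else undefined)"
  have ij: "?i (?j h) = h" if "h \<in> PiE (A \<times> B) (\<lambda>_. S)" for h
  proof (rule ext)
    fix x show "?i (?j h) x = h x"
    proof (cases x)
      case (Pair a b)
      then show ?thesis using that by (auto simp: PiE_def extensional_def)
    qed
  qed
  show ?thesis
    by (rule sum.reindex_bij_witness[where i = ?i and j = ?j])
       (use ij in \<open>auto simp: PiE_def extensional_def fun_eq_iff Pi_def\<close>)
qed

lemma sum_PiE_mult_indicator:
  fixes c :: "'a::semiring_0"
  assumes "finite I" "finite S" "\<forall>i\<in>I. T i \<in> S"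
  shows "(\<Sum>M\<in>PiE I (\<lambda>_. S). f M * (if \<forall>i\<in>I. M i = T i then c else 0)) = f (restrict T I) * c"
proof -
  have "(\<forall>i\<in>I. M i = T i) \<longleftrightarrow> M = restrict T I" if "M \<in> PiE I (\<lambda>_. S)" for M
    using that by (auto simp: PiE_iff extensional_def)
  then have "(\<Sum>M\<in>PiE I (\<lambda>_. S). f M * (if \<forall>i\<in>I. M i = T i then c else 0)) =
      (\<Sum>M\<in>PiE I (\<lambda>_. S). if M = restrict T I then f M * c else 0)"
    by (intro sum.cong) auto
  also have "\<dots> = f (restrict T I) * c"
    using assms by (simp add: finite_PiE)
  finally show ?thesis .
qed

lemma lattice_pf_one_row:
  assumes "\<forall>c\<in>{1..k}. T c \<le> K"
  shows "lattice_pf q K k Y X P T B r (Suc 0) = row_pf q K Y (X r) (P r) B T 1 k 0"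
proof -
  have "lattice_pf q K k Y X P T B r (Suc 0) = row_pf q K Y (X r) (P r) B (restrict T {1..k}) 1 k 0"
    using assms by (simp add: sum_PiE_mult_indicator)
  also have "\<dots> = row_pf q K Y (X r) (P r) B T 1 k 0"
    by (rule row_pf_cong) auto
  finally show ?thesis .
qed

text \<open>\<open>level_colours k r0 T B V i\<close> colours the vertical edges between rows \<open>i\<close> and \<open>i + 1\<close> of the
  lattice formed by the rows \<open>r0, \<dots>, k\<close>: \<open>B\<close> below, \<open>T\<close> on top and \<open>V i\<close> in between.\<close>

definition level_colours :: "nat \<Rightarrow> nat \<Rightarrow> (nat \<Rightarrow> nat) \<Rightarrow> (nat \<Rightarrow> nat) \<Rightarrow> (nat \<Rightarrow> nat \<Rightarrow> nat) \<Rightarrow>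
    nat \<Rightarrow> nat \<Rightarrow> nat" where
  "level_colours k r0 T B V i = (if i = r0 - 1 then B else if i = k then T else V i)"

lemma level_colours_fun_upd:
  "1 \<le> r0 \<Longrightarrow> r0 < k \<Longrightarrow> r0 \<le> i \<Longrightarrow>
    level_colours k r0 T B (V(r0 := M)) i = level_colours k (Suc r0) T M V i"
  by (auto simp: level_colours_def)

lemma lattice_pf_eq_sum_levels:
  assumes "1 \<le> r0" "r0 \<le> k" "\<forall>c\<in>{1..k}. T c \<le> K"
  shows "lattice_pf q K k Y X P T B r0 (Suc (k - r0)) =
    (\<Sum>V\<in>PiE {r0..<k} (\<lambda>_. PiE {1..k} (\<lambda>_. {0..K})). \<Prod>i\<in>{r0..k}.
       row_pf q K Y (X i) (P i) (level_colours k r0 T B V (i - 1)) (level_colours k r0 T B V i) 1 k 0)"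
  using assms(1,2)
proof (induction "k - r0" arbitrary: r0 B)
  case 0
  then have "r0 = k"
    by simp
  then show ?case
    using lattice_pf_one_row[OF assms(3), of q Y X P B k] 0 by (auto simp: level_colours_def simp del: lattice_pf.simps)
next
  case (Suc d)
  let ?PM = "PiE {1..k} (\<lambda>_. {0..K})"
  let ?row = "\<lambda>r0 B V i. row_pf q K Y (X i) (P i) (level_colours k r0 T B V (i - 1)) (level_colours k r0 T B V i) 1 k 0"
  have r0: "r0 < k" "Suc (k - r0) = Suc (Suc (k - Suc r0))"
    "{r0..<k} = insert r0 {Suc r0..<k}" "{r0..k} = insert r0 {Suc r0..k}"
    using Suc.hyps(2) by auto
  have "?row r0 B (V(r0 := M)) r0 = row_pf q K Y (X r0) (P r0) B M 1 k 0" for V M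
    using Suc.prems r0 by (auto simp: level_colours_def)
  moreover have "?row r0 B (V(r0 := M)) i = ?row (Suc r0) M V i" if "i \<in> {Suc r0..k}" for V M i
  proof -
    have "r0 \<le> i - 1" "r0 \<le> i"
      using that by auto
    then show ?thesis
      using level_colours_fun_upd[OF Suc.prems(1) r0(1)] by simp
  qed
  ultimately have "(\<Prod>i\<in>{r0..k}. ?row r0 B (V(r0 := M)) i) =
      row_pf q K Y (X r0) (P r0) B M 1 k 0 * (\<Prod>i\<in>{Suc r0..k}. ?row (Suc r0) M V i)" for V M
    unfolding r0(4) by simp
  then have "lattice_pf q K k Y X P T B r0 (Suc (k - r0)) =
      (\<Sum>M\<in>?PM. \<Sum>V\<in>PiE {Suc r0..<k} (\<lambda>_. ?PM). \<Prod>i\<in>{r0..k}. ?row r0 B (V(r0 := M)) i)"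
    using Suc.hyps(1)[of "Suc r0"] Suc.hyps(2) r0 by (simp add: sum_distrib_left)
  also have "\<dots> = (\<Sum>V\<in>PiE {r0..<k} (\<lambda>_. ?PM). \<Prod>i\<in>{r0..k}. ?row r0 B V i)"
    unfolding r0(3) by (rule sum_PiE_insert[symmetric]) simp
  finally show ?case .
qed

lemma row_pf_full_eq_sum_prod:
  assumes "1 \<le> k"
  shows "row_pf q K Y x a B A 1 k 0 = (\<Sum>g\<in>PiE {1..<k} (\<lambda>_. {0..K}).
     \<Prod>j\<in>{1..k}. Rw q (x / Y j) (B j) (if j = 1 then a else g (j-1)) (A j) (if j = k then 0 else g j))"
proof -
  have e1: "{1..<1+k-1} = {1..<k}" "{1..<1+k} = {1..k}" "1 + k - 1 = k" by auto
  show ?thesis using row_pf_eq_sum_prod[OF assms, of 0 K q Y x a B A 1] unfolding e1 by simp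
qed

lemma Zpf_eq_prod_rows:
  assumes "1 \<le> k"
  shows "(\<Sum>h\<in>({1..k} \<times> {1..<k}) \<rightarrow>\<^sub>E {0..k}.
      \<Prod>r\<in>{1..k}. \<Prod>c\<in>{1..k}.
        Rw q (w (rho r) / w c) (vcol k v (r - 1) c) (hcol k p h r (c - 1)) (vcol k v r c) (hcol k p h r c))
    = (\<Prod>r\<in>{1..k}. row_pf q k w (w (rho r)) (p r) (vcol k v (r - 1)) (vcol k v r) 1 k 0)"
proof -
  let ?C = "{0..k}"
  let ?unc = "\<lambda>H. (\<lambda>(a, b). if a \<in> {1..k} \<and> b \<in> {1..<k} then H a b else undefined)"
  define G where "G r g = (\<Prod>c\<in>{1..k}. Rw q (w (rho r) / w c) (vcol k v (r - 1) c)
      (if c = 1 then p r else g (c - 1)) (vcol k v r c) (if c = k then 0 else g c))" for r g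
  have "(\<Sum>h\<in>({1..k} \<times> {1..<k}) \<rightarrow>\<^sub>E ?C.
      \<Prod>r\<in>{1..k}. \<Prod>c\<in>{1..k}.
        Rw q (w (rho r) / w c) (vcol k v (r - 1) c) (hcol k p h r (c - 1)) (vcol k v r c) (hcol k p h r c))
    = (\<Sum>H\<in>PiE {1..k} (\<lambda>_. PiE {1..<k} (\<lambda>_. ?C)).
      \<Prod>r\<in>{1..k}. \<Prod>c\<in>{1..k}.
        Rw q (w (rho r) / w c) (vcol k v (r - 1) c) (hcol k p (?unc H) r (c - 1)) (vcol k v r c) (hcol k p (?unc H) r c))"
    by (rule sum_PiE_Times_curry)
  also have "\<dots> = (\<Sum>H\<in>PiE {1..k} (\<lambda>_. PiE {1..<k} (\<lambda>_. ?C)). \<Prod>r\<in>{1..k}. G r (H r))"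
    unfolding G_def
  proof (intro sum.cong refl prod.cong)
    fix H r c assume r: "r \<in> {1..k}" and c: "c \<in> {1..k}"
    have h1: "hcol k p (?unc H) r (c - 1) = (if c = 1 then p r else H r (c - 1))"
      using r c by (auto simp: hcol_def)
    have h2: "hcol k p (?unc H) r c = (if c = k then 0 else H r c)"
      using r c by (auto simp: hcol_def)
    show "Rw q (w (rho r) / w c) (vcol k v (r - 1) c) (hcol k p (?unc H) r (c - 1)) (vcol k v r c) (hcol k p (?unc H) r c) =
      Rw q (w (rho r) / w c) (vcol k v (r - 1) c) (if c = 1 then p r else H r (c - 1)) (vcol k v r c) (if c = k then 0 else H r c)"
      unfolding h1 h2 ..
  qed
  also have "\<dots> = (\<Prod>r\<in>{1..k}. \<Sum>g\<in>PiE {1..<k} (\<lambda>_. ?C). G r g)"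
    by (rule prod_sum_PiE[symmetric]) (auto intro: finite_PiE)
  also have "\<dots> = (\<Prod>r\<in>{1..k}. row_pf q k w (w (rho r)) (p r) (vcol k v (r - 1)) (vcol k v r) 1 k 0)"
    by (rule prod.cong[OF refl]) (simp only: G_def row_pf_full_eq_sum_prod[OF assms])
  finally show ?thesis .
qed

lemma Zpf_eq_lattice_pf:
  assumes "1 \<le> k"
  shows "Zpf q k p rho w = lattice_pf q k k w (\<lambda>r. w (rho r)) p (\<lambda>c. c) (\<lambda>_. 0) 1 k"
proof -
  let ?C = "{0..k}"
  let ?PM = "PiE {1..k} (\<lambda>_. ?C)"
  let ?unc = "\<lambda>H. (\<lambda>(a, b). if a \<in> {1..<k} \<and> b \<in> {1..k} then H a b else undefined)"
  have "Zpf q k p rho w = (\<Sum>v\<in>({1..<k} \<times> {1..k}) \<rightarrow>\<^sub>E ?C. \<Sum>h\<in>({1..k} \<times> {1..<k}) \<rightarrow>\<^sub>E ?C.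
      \<Prod>r\<in>{1..k}. \<Prod>c\<in>{1..k}.
        Rw q (w (rho r) / w c) (vcol k v (r - 1) c) (hcol k p h r (c - 1)) (vcol k v r c) (hcol k p h r c))"
    unfolding Zpf_def by (rule sum.swap)
  also have "\<dots> = (\<Sum>v\<in>({1..<k} \<times> {1..k}) \<rightarrow>\<^sub>E ?C. \<Prod>r\<in>{1..k}. row_pf q k w (w (rho r)) (p r) (vcol k v (r - 1)) (vcol k v r) 1 k 0)"
    by (intro sum.cong refl Zpf_eq_prod_rows assms)
  also have "\<dots> = (\<Sum>V\<in>PiE {1..<k} (\<lambda>_. ?PM). \<Prod>r\<in>{1..k}. row_pf q k w (w (rho r)) (p r) (vcol k (?unc V) (r - 1)) (vcol k (?unc V) r) 1 k 0)"
    by (rule sum_PiE_Times_curry)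
  also have "\<dots> = (\<Sum>V\<in>PiE {1..<k} (\<lambda>_. ?PM). \<Prod>r\<in>{1..k}. row_pf q k w (w (rho r)) (p r) (level_colours k 1 (\<lambda>c. c) (\<lambda>_. 0) V (r - 1)) (level_colours k 1 (\<lambda>c. c) (\<lambda>_. 0) V r) 1 k 0)"
  proof (intro sum.cong refl prod.cong row_pf_cong conjI)
    fix V r j assume r: "r \<in> {1..k}" and j: "1 \<le> j" "j < 1 + k"
    show "vcol k (?unc V) (r - 1) j = level_colours k 1 (\<lambda>c. c) (\<lambda>_. 0) V (r - 1) j"
      using r j by (auto simp: vcol_def level_colours_def)
    show "vcol k (?unc V) r j = level_colours k 1 (\<lambda>c. c) (\<lambda>_. 0) V r j"
      using r j by (auto simp: vcol_def level_colours_def)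
  qed
  also have "\<dots> = lattice_pf q k k w (\<lambda>r. w (rho r)) p (\<lambda>c. c) (\<lambda>_. 0) 1 (Suc (k - 1))"
    using assms by (intro lattice_pf_eq_sum_levels[symmetric]) auto
  also have "Suc (k - 1) = k" using assms by simp
  finally show ?thesis .
qed

section \<open>The frozen lattice for the identity\<close>

lemma row_pf_Suc_conserved:
  assumes "a \<le> K" "B c \<le> K"
  shows "row_pf q K Y x a B A c (Suc n) e =
    Rw q (x / Y c) (B c) a (A c) (if A c = B c then a else B c) *
    row_pf q K Y x (if A c = B c then a else B c) B A (Suc c) n e"
  using assms by (simp add: sum_Rw_right)

lemma row_pf_crossing_prefix:
  assumes "\<forall>j\<in>{c..<c + n}. A j = j \<and> j < a \<and> B j \<le> K" "a \<le> K"
  shows "row_pf q K Y x a B A c (n + m) e =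
    (if \<forall>j\<in>{c..<c + n}. B j = j
     then (\<Prod>j\<in>{c..<c + n}. Rw q (x / Y j) j a j a) * row_pf q K Y x a B A (c + n) m e else 0)"
  using assms(1)
proof (induction n arbitrary: c)
  case (Suc n)
  have ivl: "{c..<c + Suc n} = insert c {Suc c..<Suc c + n}"
    by auto
  with Suc.prems have c: "A c = c" "c < a" "B c \<le> K"
    and rest: "\<forall>j\<in>{Suc c..<Suc c + n}. A j = j \<and> j < a \<and> B j \<le> K"
    by auto
  have step: "row_pf q K Y x a B A c (Suc n + m) e =
      Rw q (x / Y c) (B c) a c (if c = B c then a else B c) *
      row_pf q K Y x (if c = B c then a else B c) B A (Suc c) (n + m) e"
    using row_pf_Suc_conserved[of a K B c q Y x A "n + m" e, OF assms(2) c(3)] unfolding c(1) add_Suc .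
  show ?case
  proof (cases "B c = c")
    case True
    then show ?thesis
      using Suc.IH[OF rest] unfolding step ivl by (simp add: mult.assoc del: row_pf.simps)
  next
    case False
    then have "Rw q (x / Y c) (B c) a c (B c) = 0"
      using c(2) Rw_conservation[of q "x / Y c" "B c" a c "B c"] by auto
    then show ?thesis
      using False unfolding step ivl by (simp del: row_pf.simps)
  qed
qed simp

lemma row_pf_empty_suffix:
  assumes "\<forall>j\<in>{c..<c + n}. A j = 0 \<and> B j \<le> K" "h \<le> K"
  shows "row_pf q K Y x h B A c n 0 = (if h = 0 \<and> (\<forall>j\<in>{c..<c + n}. B j = 0) then 1 else 0)"
  using assms
proof (induction n arbitrary: h c)
  case (Suc n)
  have ivl: "{c..<c + Suc n} = insert c {Suc c..<Suc c + n}"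
    by auto
  with Suc.prems have c: "A c = 0" "B c \<le> K" and rest: "\<forall>j\<in>{Suc c..<Suc c + n}. A j = 0 \<and> B j \<le> K"
    by auto
  have step: "row_pf q K Y x h B A c (Suc n) 0 =
      Rw q (x / Y c) (B c) h 0 (if 0 = B c then h else B c) *
      row_pf q K Y x (if 0 = B c then h else B c) B A (Suc c) n 0"
    using row_pf_Suc_conserved[of h K B c q Y x A n 0, OF Suc.prems(2) c(2)] unfolding c(1) .
  have "Rw q z 0 0 0 0 = 1" for z
    by (simp add: Rw_def)
  then show ?case
    using Suc.IH[OF rest Suc.prems(2)] Suc.IH[OF rest c(2)]
    unfolding step ivl by (cases "B c = 0") (auto simp del: row_pf.simps)
qed simp

text \<open>For \<open>p = id\<close> only one configuration has non-zero weight: the path of colour \<open>r\<close> runs along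
  row \<open>r\<close> up to column \<open>r\<close> and then straight up.  \<open>id_level r\<close> gives the colours of the vertical
  edges above row \<open>r\<close>, \<open>id_row_weight\<close> the weight of row \<open>r\<close>.\<close>

definition id_level :: "nat \<Rightarrow> nat \<Rightarrow> nat" where
  "id_level r c = (if c \<le> r then c else 0)"

definition id_row_weight :: "'a::field \<Rightarrow> (nat \<Rightarrow> 'a) \<Rightarrow> 'a \<Rightarrow> nat \<Rightarrow> 'a" where
  "id_row_weight q Y x r = (\<Prod>c\<in>{1..<r}. Rw q (x / Y c) c r c r) * Rw q (x / Y r) 0 r r 0"

lemma id_level_iff:
  assumes "1 \<le> r" "r \<le> k"
  shows "(\<forall>c\<in>{1..k}. B c = id_level (r - 1) c) \<longleftrightarrow>
    (\<forall>j\<in>{1..<r}. B j = j) \<and> B r = 0 \<and> (\<forall>j\<in>{Suc r..<Suc r + (k - r)}. B j = 0)"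
proof -
  have "{1..k} = {1..<r} \<union> {r} \<union> {Suc r..<Suc r + (k - r)}"
    using assms by auto
  then show ?thesis
    using assms by (auto simp: id_level_def)
qed

lemma row_pf_id_level:
  assumes "1 \<le> r" "r \<le> k" "k \<le> K" "\<forall>c\<in>{1..k}. B c \<le> K"
  shows "row_pf q K Y x r B (id_level r) 1 k 0 =
    (if \<forall>c\<in>{1..k}. B c = id_level (r - 1) c then id_row_weight q Y x r else 0)"
proof -
  let ?A = "id_level r" and ?m = "if r = B r then r else B r"
  have k: "r - 1 + Suc (k - r) = k" and r: "1 + (r - 1) = r"
    using assms by auto
  have prefix: "\<forall>j\<in>{1..<1 + (r - 1)}. ?A j = j \<and> j < r \<and> B j \<le> K"
    using assms by (auto simp: id_level_def)
  have suffix: "\<forall>j\<in>{Suc r..<Suc r + (k - r)}. ?A j = 0 \<and> B j \<le> K"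
    using assms by (auto simp: id_level_def)
  have "B r \<le> K" "r \<le> K"
    using assms by auto
  then have step: "row_pf q K Y x r B ?A r (Suc (k - r)) 0 =
      Rw q (x / Y r) (B r) r r ?m * row_pf q K Y x ?m B ?A (Suc r) (k - r) 0"
    using row_pf_Suc_conserved[of r K B r q Y x ?A "k - r" 0] by (simp add: id_level_def)
  have "?m \<le> K"
    using \<open>B r \<le> K\<close> \<open>r \<le> K\<close> by simp
  then have last: "row_pf q K Y x r B ?A r (Suc (k - r)) 0 =
      (if B r = 0 \<and> (\<forall>j\<in>{Suc r..<Suc r + (k - r)}. B j = 0) then Rw q (x / Y r) 0 r r 0 else 0)"
    using assms(1) unfolding step row_pf_empty_suffix[OF suffix \<open>?m \<le> K\<close>] by auto
  have "row_pf q K Y x r B ?A 1 k 0 =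
      (if \<forall>j\<in>{1..<r}. B j = j
       then (\<Prod>j\<in>{1..<r}. Rw q (x / Y j) j r j r) * row_pf q K Y x r B ?A r (Suc (k - r)) 0 else 0)"
    using row_pf_crossing_prefix[OF prefix \<open>r \<le> K\<close>, of q Y x "Suc (k - r)" 0] unfolding k r .
  then show ?thesis
    unfolding last id_level_iff[OF assms(1,2)] id_row_weight_def by simp
qed

lemma lattice_pf_id_levels:
  assumes "k \<le> K" "r \<le> k" "\<forall>c\<in>{1..k}. B c \<le> K"
  shows "lattice_pf q K k Y X id (\<lambda>c. c) B (Suc r) (k - r) =
    (if \<forall>c\<in>{1..k}. B c = id_level r c then \<Prod>i\<in>{Suc r..k}. id_row_weight q Y (X i) i else 0)"
  using assms(2,3)
proof (induction "k - r" arbitrary: r B)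
  case 0
  then have "id_level r c = c" if "c \<in> {1..k}" for c
    using that by (simp add: id_level_def)
  then show ?case
    using 0 by simp
next
  case (Suc d)
  let ?PM = "PiE {1..k} (\<lambda>_. {0..K})" and ?W = "\<lambda>i. id_row_weight q Y (X i) i"
  have r: "r < k" "k - r = Suc (k - Suc r)" "{Suc r..k} = insert (Suc r) {Suc (Suc r)..k}"
    using Suc.hyps(2) by auto
  have IH: "lattice_pf q K k Y X id (\<lambda>c. c) M (Suc (Suc r)) (k - Suc r) =
      (if \<forall>c\<in>{1..k}. M c = id_level (Suc r) c then \<Prod>i\<in>{Suc (Suc r)..k}. ?W i else 0)"
    if "M \<in> ?PM" for M
    using Suc.hyps r that by (intro Suc.hyps(1)) (auto simp: PiE_iff)
  have "lattice_pf q K k Y X id (\<lambda>c. c) B (Suc r) (k - r) = (\<Sum>M\<in>?PM.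
      row_pf q K Y (X (Suc r)) (Suc r) B M 1 k 0 *
      (if \<forall>c\<in>{1..k}. M c = id_level (Suc r) c then \<Prod>i\<in>{Suc (Suc r)..k}. ?W i else 0))"
    unfolding r(2) lattice_pf.simps(2) using IH by (intro sum.cong) auto
  also have "\<dots> = row_pf q K Y (X (Suc r)) (Suc r) B (restrict (id_level (Suc r)) {1..k}) 1 k 0 *
      (\<Prod>i\<in>{Suc (Suc r)..k}. ?W i)"
    using assms(1) by (intro sum_PiE_mult_indicator) (auto simp: id_level_def)
  also have "row_pf q K Y (X (Suc r)) (Suc r) B (restrict (id_level (Suc r)) {1..k}) 1 k 0 =
      row_pf q K Y (X (Suc r)) (Suc r) B (id_level (Suc r)) 1 k 0"
    by (rule row_pf_cong) auto
  also have "\<dots> = (if \<forall>c\<in>{1..k}. B c = id_level r c then ?W (Suc r) else 0)"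
    using row_pf_id_level[of "Suc r" k K B q Y "X (Suc r)"] Suc.prems assms(1) r by simp
  also have "\<dots> * (\<Prod>i\<in>{Suc (Suc r)..k}. ?W i) =
      (if \<forall>c\<in>{1..k}. B c = id_level r c then \<Prod>i\<in>{Suc r..k}. ?W i else 0)"
    unfolding r(3) by simp
  finally show ?case .
qed

lemma Zpf_id_eq_prod:
  assumes "1 \<le> k"
  shows "Zpf q k id t w = (\<Prod>i\<in>{1..k}. id_row_weight q w (w (t i)) i)"
proof -
  have "Zpf q k id t w = lattice_pf q k k w (\<lambda>r. w (t r)) id (\<lambda>c. c) (\<lambda>_. 0) (Suc 0) (k - 0)"
    using Zpf_eq_lattice_pf[OF assms] by simp
  also have "\<dots> = (\<Prod>i\<in>{1..k}. id_row_weight q w (w (t i)) i)"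
    by (subst lattice_pf_id_levels) (auto simp: id_level_def)
  finally show ?thesis .
qed

text \<open>Equal row and column rapidities give \<open>z = 1\<close> and kill the weight \<open>(z - 1) / (z - q)\<close>.\<close>

lemma id_row_weight_eq_0:
  assumes "c \<in> {1..<r}" "Y c \<noteq> 0"
  shows "id_row_weight q Y (Y c) r = 0"
proof -
  have "Rw q (Y c / Y c) c r c r = 0"
    using assms by (simp add: Rw_def)
  then have "(\<Prod>c'\<in>{1..<r}. Rw q (Y c / Y c') c' r c' r) = 0"
    using assms(1) by (intro prod_zero) blast+
  then show ?thesis
    unfolding id_row_weight_def by simp
qed

lemma id_row_weight_diagonal:
  fixes q :: "'a::field"
  assumes "Y r \<noteq> 0" "q \<noteq> 1" "\<forall>c\<in>{1..<r}. Y c \<noteq> 0 \<and> Y r \<noteq> q * Y c"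
  shows "id_row_weight q Y (Y r) r = (\<Prod>c\<in>{1..<r}. (Y r - Y c) / (Y r - q * Y c))"
proof -
  have "Rw q (Y r / Y r) 0 r r 0 = 1"
    using assms(1,2) by (auto simp: Rw_def)
  moreover have "Rw q (Y r / Y c) c r c r = (Y r - Y c) / (Y r - q * Y c)" if "c \<in> {1..<r}" for c
  proof -
    have "Y c \<noteq> 0" "Y r / Y c - q \<noteq> 0"
      using that assms(3) by (auto simp: field_simps)
    then show ?thesis
      using that by (auto simp: Rw_def field_simps)
  qed
  ultimately show ?thesis
    unfolding id_row_weight_def by simp
qed

lemma prod_pairs_below:
  fixes k :: nat
  shows "(\<Prod>i\<in>{1..k}. \<Prod>c\<in>{1..<i}. h c i) = (\<Prod>(a, b)\<in>{(a, b). a \<in> {1..k} \<and> b \<in> {1..k} \<and> a < b}. h a b)"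
proof -
  have "(\<Prod>i\<in>{1..k}. \<Prod>c\<in>{1..<i}. h c i) = (\<Prod>(i, c)\<in>(SIGMA i:{1..k}. {1..<i}). h c i)"
    by (rule prod.Sigma) auto
  also have "\<dots> = (\<Prod>(a, b)\<in>{(a, b). a \<in> {1..k} \<and> b \<in> {1..k} \<and> a < b}. h a b)"
    by (rule prod.reindex_bij_witness[where i = "\<lambda>(a, b). (b, a)" and j = "\<lambda>(i, c). (c, i)"]) auto
  finally show ?thesis .
qed

definition prefactor :: "'a::field \<Rightarrow> nat \<Rightarrow> (nat \<Rightarrow> 'a) \<Rightarrow> 'a" where
  "prefactor q k w = (\<Prod>(a, b)\<in>{(a, b). a \<in> {1..k} \<and> b \<in> {1..k} \<and> a < b}. (w b - q * w a) / (w b - w a))"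

lemma prefactor_mult_Zpf_id_id:
  fixes q :: "'a::field" and w :: "nat \<Rightarrow> 'a"
  assumes k: "1 \<le> k"
    and w0: "\<forall>i\<in>{1..k}. w i \<noteq> 0"
    and winj: "\<forall>a\<in>{1..k}. \<forall>b\<in>{1..k}. a \<noteq> b \<longrightarrow> w a \<noteq> w b"
    and wq: "\<forall>a\<in>{1..k}. \<forall>b\<in>{1..k}. w a \<noteq> q * w b"
  shows "prefactor q k w * Zpf q k id id w = 1"
proof -
  have "q \<noteq> 1"
    using wq w0 k by force
  then have Z: "Zpf q k id id w = (\<Prod>i\<in>{1..k}. \<Prod>c\<in>{1..<i}. (w i - w c) / (w i - q * w c))"
    unfolding Zpf_id_eq_prod[OF k] id_apply
    using w0 wq by (intro prod.cong refl id_row_weight_diagonal) auto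
  have "prefactor q k w * Zpf q k id id w =
      (\<Prod>(a, b)\<in>{(a, b). a \<in> {1..k} \<and> b \<in> {1..k} \<and> a < b}.
        (w b - q * w a) / (w b - w a) * ((w b - w a) / (w b - q * w a)))"
    unfolding Z prefactor_def prod_pairs_below[where k = k and h = "\<lambda>c i. (w i - w c) / (w i - q * w c)"]
    by (simp only: prod.distrib[symmetric] split_def)
  also have "\<dots> = 1"
    using winj wq by (intro prod.neutral) auto
  finally show ?thesis .
qed

lemma prefactor_mult_Zpf_id:
  fixes q :: "'a::field" and w :: "nat \<Rightarrow> 'a"
  assumes t: "t permutes {1..k}"
    and w0: "\<forall>i\<in>{1..k}. w i \<noteq> 0"
    and winj: "\<forall>a\<in>{1..k}. \<forall>b\<in>{1..k}. a \<noteq> b \<longrightarrow> w a \<noteq> w b"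
    and wq: "\<forall>a\<in>{1..k}. \<forall>b\<in>{1..k}. w a \<noteq> q * w b"
  shows "prefactor q k w * Zpf q k id t w = (if t = id then 1 else 0)"
proof (cases "k = 0")
  case True
  then show ?thesis
    using t by (simp add: prefactor_def Zpf_def)
next
  case False
  then have k: "1 \<le> k"
    by simp
  show ?thesis
  proof (cases "t = id")
    case False
    then obtain i where i: "i \<in> {1..k}" "t i < i"
      using permutes_exists_apply_less[OF t] by blast
    then have "t i \<in> {1..<i}"
      using permutes_in_image[OF t, of i] by auto
    then have "id_row_weight q w (w (t i)) i = 0"
      using w0 i by (intro id_row_weight_eq_0) auto
    then have "Zpf q k id t w = 0"
      unfolding Zpf_id_eq_prod[OF k] using i by (auto intro: prod_zero)
    then show ?thesis
      using False by simp
  qed (simp add: prefactor_mult_Zpf_id_id[OF k w0 winj wq])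
qed

section \<open>The exchange recursion\<close>

lemma Zpf_comp_sigma_ascent:
  fixes q :: "'a::field" and w :: "nat \<Rightarrow> 'a"
  assumes w0: "\<forall>i\<in>{1..k}. w i \<noteq> 0" and wq: "\<forall>a\<in>{1..k}. \<forall>b\<in>{1..k}. w a \<noteq> q * w b"
    and t: "t permutes {1..k}" and p: "p permutes {1..k}" and j: "1 \<le> j" "j < k"
    and asc: "p j < p (Suc j)"
  defines "z \<equiv> w (t j) / w (t (Suc j))"
  shows "Zpf q k p (t \<circ> sigma j) w =
    (z - 1) / (z - q) * Zpf q k (p \<circ> sigma j) t w + (1 - q) / (z - q) * Zpf q k p t w"
proof -
  have k: "1 \<le> k"
    using j by simp
  have jk: "j \<in> {1..k}" "Suc j \<in> {1..k}"
    using j by auto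
  have t_in: "t i \<in> {1..k}" and p_in: "p i \<in> {1..k}" if "i \<in> {1..k}" for i
    using that permutes_in_image[OF t] permutes_in_image[OF p] by auto
  have nz: "w c \<noteq> 0" "w (t i) / w c - q \<noteq> 0" if "c \<in> {1..k}" "i \<in> {1..k}" for c i
    using that w0 wq t_in[OF that(2)] by (auto simp: field_simps)
  let ?L = "\<lambda>P. lattice_pf q k k w (\<lambda>r. w (t r)) P (\<lambda>c. c) (\<lambda>_. 0) 1 k"
  let ?R = "Rw q z (p j) (p (Suc j))"
  have "w (t (Suc j)) \<noteq> 0" "w (t j) / w (t (Suc j)) - q \<noteq> 0"
    using nz[OF t_in[OF jk(2)] jk(1)] by auto
  have "Zpf q k p (t \<circ> sigma j) w = lattice_pf q k k w (\<lambda>i. w (t (sigma j i))) p (\<lambda>c. c) (\<lambda>_. 0) 1 k"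
    using Zpf_eq_lattice_pf[OF k, of q p "t \<circ> sigma j" w] by (simp add: comp_def)
  also have "\<dots> = (\<Sum>c'\<in>{0..k}. \<Sum>d\<in>{0..k}. ?R c' d * ?L (p(j := d, Suc j := c')))"
    unfolding z_def using j \<open>w (t (Suc j)) \<noteq> 0\<close> \<open>w (t j) / w (t (Suc j)) - q \<noteq> 0\<close> nz t_in p_in jk
    by (intro lattice_pf_swap_rows) auto
  also have "\<dots> = ?R (p j) (p (Suc j)) * ?L (p(j := p (Suc j), Suc j := p j)) + ?R (p (Suc j)) (p j) * ?L p"
    using asc p_in[OF jk(1)] p_in[OF jk(2)] by (subst sum_Rw_out) auto
  also have "p(j := p (Suc j), Suc j := p j) = p \<circ> sigma j"
    by (auto simp: fun_eq_iff sigma_def transpose_def)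
  also have "?R (p j) (p (Suc j)) = (z - 1) / (z - q)"
    using asc by (simp add: Rw_def)
  also have "?R (p (Suc j)) (p j) = (1 - q) / (z - q)"
    using asc by (simp add: Rw_def)
  finally show ?thesis
    by (simp only: Zpf_eq_lattice_pf[OF k])
qed

lemma minus_one_powi_diff: "(-1::'a::field) powi (int m - int n) = (-1) ^ (m + n)"
proof -
  have "(-1::'a) powi (int m - int n) = (if even (int m - int n) then 1 else -1)"
    by (simp add: power_int_minus_left)
  moreover have "even (int m - int n) \<longleftrightarrow> even (m + n)"
    by (simp add: even_diff)
  ultimately show ?thesis
    by (simp add: minus_one_power_iff)
qed

lemma minus_one_power_perm_length_comp_sigma:
  assumes "g permutes {1..k}" "1 \<le> j" "j < k"
  shows "(-1::'a::ring_1) ^ perm_length k (g \<circ> sigma j) = - ((-1) ^ perm_length k g)"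
  using assms
proof (cases rule: perm_length_comp_sigma_cases)
  case 2
  then show ?thesis
    by (simp add: 2(2)[symmetric])
qed simp

lemma exchange_identity:
  fixes S P Z Z' c c0 r1 r2 :: "'a::comm_ring_1"
  assumes "c * r1 = 1" "c * r2 = c0"
  shows "S * P * Z' * c0 + (- S) * P * (r1 * Z + r2 * Z') * c = (- S) * P * Z"
proof -
  have "S * P * Z' * c0 + (- S) * P * (r1 * Z + r2 * Z') * c = S * P * Z' * (c0 - c * r2) - S * P * Z * (c * r1)"
    by (simp add: algebra_simps)
  then show ?thesis
    using assms by simp
qed

lemma exchange_coefficients:
  fixes q x y :: "'a::field"
  assumes "y \<noteq> 0" "x \<noteq> y" "x \<noteq> q * y"
  shows "(x - q * y) / (x - y) * ((x / y - 1) / (x / y - q)) = 1"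
    and "(x - q * y) / (x - y) * ((1 - q) / (x / y - q)) = q - (y - q * x) / (y - x)"
proof -
  have ne: "x - y \<noteq> 0" "y - x \<noteq> 0" "x - q * y \<noteq> 0"
    using assms by auto
  have "x / y - 1 = (x - y) / y" "x / y - q = (x - q * y) / y"
    using assms(1) by (simp_all add: field_simps)
  then have r: "(x / y - 1) / (x / y - q) = (x - y) / (x - q * y)" "(1 - q) / (x / y - q) = (1 - q) * y / (x - q * y)"
    using assms(1) by simp_all
  show "(x - q * y) / (x - y) * ((x / y - 1) / (x / y - q)) = 1"
    unfolding r using ne by simp
  have "q - (y - q * x) / (y - x) = (1 - q) * y / (x - y)"
    using ne by (simp add: field_simps)
  then show "(x - q * y) / (x - y) * ((1 - q) / (x / y - q)) = q - (y - q * x) / (y - x)"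
    unfolding r using ne by simp
qed

lemma T_word_Nil_eq_Zpf:
  fixes q :: "'a::field" and w :: "nat \<Rightarrow> 'a"
  assumes w0: "\<forall>i\<in>{1..k}. w i \<noteq> 0"
    and winj: "\<forall>a\<in>{1..k}. \<forall>b\<in>{1..k}. a \<noteq> b \<longrightarrow> w a \<noteq> w b"
    and wq: "\<forall>a\<in>{1..k}. \<forall>b\<in>{1..k}. w a \<noteq> q * w b"
    and t: "t permutes {1..k}"
  shows "T_word q k [] t w = (-1) ^ (perm_length k id + perm_length k t) * prefactor q k w * Zpf q k id t w"
proof -
  have sign: "(-1::'a) ^ (perm_length k id + perm_length k id) = 1"
    by (simp only: perm_length_id add_0 power_0)
  show ?thesis
    unfolding T_word_Nil op_one_def mult.assoc prefactor_mult_Zpf_id[OF t w0 winj wq]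
    by (cases "t = id") (simp_all only: sign simp_thms(6) if_True if_False mult_1_right mult_zero_right)
qed

lemma T_word_eq_Zpf:
  fixes q :: "'a::field" and w :: "nat \<Rightarrow> 'a"
  assumes w0: "\<forall>i\<in>{1..k}. w i \<noteq> 0"
    and winj: "\<forall>a\<in>{1..k}. \<forall>b\<in>{1..k}. a \<noteq> b \<longrightarrow> w a \<noteq> w b"
    and wq: "\<forall>a\<in>{1..k}. \<forall>b\<in>{1..k}. w a \<noteq> q * w b"
    and "reduced_word k p ws" "t permutes {1..k}"
  shows "T_word q k ws t w = (-1) ^ (perm_length k p + perm_length k t) * prefactor q k w * Zpf q k p t w"
  using assms(4,5)
proof (induction ws arbitrary: p t rule: rev_induct)
  case Nil
  then have "p = id"
    unfolding reduced_word_iff word_perm_Nil by simp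
  then show ?case
    using T_word_Nil_eq_Zpf[OF w0 winj wq Nil.prems(2)] by (simp only:)
next
  case (snoc j ws)
  define p' where "p' = p \<circ> sigma j"
  note red = reduced_word_snocD[OF snoc.prems(1), folded p'_def]
  have j: "1 \<le> j" "j < k" and t: "t permutes {1..k}"
    using red snoc.prems by auto
  have p': "p' permutes {1..k}"
    using red(1) word_perm_permutes by (auto simp: reduced_word_iff)
  have p'_sigma: "p' \<circ> sigma j = p"
    unfolding p'_def by (simp only: comp_assoc sigma_comp_sigma comp_id)
  let ?x = "w (t j)" and ?y = "w (t (Suc j))"
  have "j \<in> {1..k}" "Suc j \<in> {1..k}"
    using j by auto
  then have tj: "t j \<in> {1..k}" "t (Suc j) \<in> {1..k}" "t j \<noteq> t (Suc j)"
    using permutes_in_image[OF t] permutes_apply_Suc_neq[OF t] by auto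
  then have xy: "?y \<noteq> 0" "?x \<noteq> ?y" "?x \<noteq> q * ?y"
    using w0 winj wq by auto
  define S where "S = (-1::'a) ^ (perm_length k p' + perm_length k t)"
  have sign_p: "(-1) ^ (perm_length k p + perm_length k t) = - S"
    using red(5) by (simp add: S_def)
  have sign_t: "(-1) ^ (perm_length k p' + perm_length k (t \<circ> sigma j)) = - S"
    unfolding S_def power_add minus_one_power_perm_length_comp_sigma[OF t j] by simp
  have t_sigma: "t \<circ> sigma j permutes {1..k}"
    using permutes_compose[OF sigma_permutes[OF j] t] .
  have IH: "T_word q k ws t w = S * prefactor q k w * Zpf q k p' t w"
    "T_word q k ws (t \<circ> sigma j) w = (- S) * prefactor q k w * Zpf q k p' (t \<circ> sigma j) w"
    using snoc.IH[OF red(1) t] snoc.IH[OF red(1) t_sigma] unfolding S_def[symmetric] sign_t .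
  have "T_word q k (ws @ [j]) t w =
      T_word q k ws t w * (q - (?y - q * ?x) / (?y - ?x))
    + T_word q k ws (t \<circ> sigma j) w * ((?x - q * ?y) / (?x - ?y))"
    by (rule T_word_snoc_apply[OF t j])
  also have "\<dots> = S * prefactor q k w * Zpf q k p' t w * (q - (?y - q * ?x) / (?y - ?x))
    + (- S) * prefactor q k w * ((?x / ?y - 1) / (?x / ?y - q) * Zpf q k p t w
        + (1 - q) / (?x / ?y - q) * Zpf q k p' t w) * ((?x - q * ?y) / (?x - ?y))"
    unfolding IH Zpf_comp_sigma_ascent[OF w0 wq t p' j red(4)] p'_sigma ..
  also have "\<dots> = (-1) ^ (perm_length k p + perm_length k t) * prefactor q k w * Zpf q k p t w"
    unfolding sign_p by (rule exchange_identity) (use exchange_coefficients[OF xy] in \<open>simp_all add: mult.commute\<close>)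
  finally show ?case .
qed

theorem proposition3p2:
  fixes q :: "'a::field" and k :: nat and p rho :: "nat \<Rightarrow> nat" and w :: "nat \<Rightarrow> 'a"
  assumes "p permutes {1..k}" and "rho permutes {1..k}"
    and "\<forall>i\<in>{1..k}. w i \<noteq> 0"
    and "\<forall>a\<in>{1..k}. \<forall>b\<in>{1..k}. a \<noteq> b \<longrightarrow> w a \<noteq> w b"
    and "\<forall>a\<in>{1..k}. \<forall>b\<in>{1..k}. w a \<noteq> q * w b"
  shows "kappa q k p rho w =
    (-1) powi (int (perm_length k p) - int (perm_length k rho))
    * (\<Prod>(a, b)\<in>{(a, b). a \<in> {1..k} \<and> b \<in> {1..k} \<and> a < b}. (w b - q * w a) / (w b - w a))
    * Zpf q k p rho w"
proof -
  have "reduced_word k p (SOME ws. reduced_word k p ws)"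
    using reduced_word_exists[OF assms(1)] by (rule someI_ex)
  then have "kappa q k p rho w = (-1) ^ (perm_length k p + perm_length k rho) * prefactor q k w * Zpf q k p rho w"
    unfolding kappa_def T_perm_def using assms(2-5) by (intro T_word_eq_Zpf)
  then show ?thesis
    unfolding minus_one_powi_diff prefactor_def .
qed

end
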